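(* Let $e(n)$ be the number of permutations in $S_n$ avoiding the four patterns $2413$, $4132$, $4213$, $3214$. Then $e(1)=1$, $e(2)=2$, and $e(n)=4e(n-1)-2e(n-2)$ for $n\ge 3$; explicitly, $$e(n)=\frac{(2+\sqrt2)^{n-1}+(2-\sqrt2)^{n-1}}{2}\quad\text{for all } n\ge1.$$
   Context: A permutation $w\in S_n$ avoids a pattern $p\in S_m$ if there are no indices $i_1<\dots<i_m$ such that $(w(i_1),\dots,w(i_m))$ is in the same relative order as $(p(1),\dots,p(m))$. *)

theory Defs
  imports Complex_Main "HOL-Combinatorics.Permutations"
begin

definition contains_pattern :: "nat \<Rightarrow> (nat \<Rightarrow> nat) \<Rightarrow> nat \<Rightarrow> (nat \<Rightarrow> nat) \<Rightarrow> bool" where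
  "contains_pattern n w m p \<longleftrightarrow>
     (\<exists>idx :: nat \<Rightarrow> nat. strict_mono_on {1..m} idx \<and> idx ` {1..m} \<subseteq> {1..n} \<and>
        (\<forall>a\<in>{1..m}. \<forall>b\<in>{1..m}. w (idx a) < w (idx b) \<longleftrightarrow> p a < p b))"

definition avoids :: "nat \<Rightarrow> (nat \<Rightarrow> nat) \<Rightarrow> nat \<Rightarrow> (nat \<Rightarrow> nat) \<Rightarrow> bool" where
  "avoids n w m p \<longleftrightarrow> \<not> contains_pattern n w m p"

text \<open>The permutation of {1..length xs} given in one-line notation by xs.\<close>
definition perm_of_list :: "nat list \<Rightarrow> nat \<Rightarrow> nat" where
  "perm_of_list xs = (\<lambda>i. if 1 \<le> i \<and> i \<le> length xs then xs ! (i - 1) else i)"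

definition pat2413 :: "nat \<Rightarrow> nat" where "pat2413 = perm_of_list [2,4,1,3]"
definition pat4132 :: "nat \<Rightarrow> nat" where "pat4132 = perm_of_list [4,1,3,2]"
definition pat4213 :: "nat \<Rightarrow> nat" where "pat4213 = perm_of_list [4,2,1,3]"
definition pat3214 :: "nat \<Rightarrow> nat" where "pat3214 = perm_of_list [3,2,1,4]"

definition e :: "nat \<Rightarrow> nat" where
  "e n = card {w. w permutes {1..n} \<and> avoids n w 4 pat2413 \<and> avoids n w 4 pat4132
                 \<and> avoids n w 4 pat4213 \<and> avoids n w 4 pat3214}"

end

theory Submission
  imports Defs
begin

text \<open>Permutations are handled as lists in one-line notation. The avoiders of length \<open>n\<close> are
  sorted by the positions \<open>P\<close> of \<open>n\<close> and \<open>Q\<close> of \<open>n - 1\<close>. If \<open>Q = P + 1\<close>, deleting \<open>n\<close> is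
  a bijection onto the avoiders of length \<open>n - 1\<close>; if \<open>P = Q + 1\<close>, so is merging the adjacent
  entries \<open>n - 1, n\<close> into one. If \<open>Q \<ge> P + 2\<close>, the two entries after \<open>n\<close> are forced to be
  consecutive increasing values, and merging them is a bijection onto the avoiders of length
  \<open>n - 1\<close> in which \<open>n - 1\<close> precedes \<open>n - 2\<close>; likewise, if \<open>P \<ge> Q + 3\<close>, merging the two entries
  after \<open>n - 1\<close> leads to the avoiders of length \<open>n - 1\<close> with \<open>n - 1\<close> at least two places after
  \<open>n - 2\<close>. Finally, the places where a new maximum can be inserted into an avoider of length
  \<open>n - 2\<close> form a nonempty interval, and its non-final places correspond to the avoiders with
  \<open>P = Q + 2\<close> (insert \<open>n - 1\<close> there and \<open>n\<close> two places later), which therefore number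
  \<open>e(n - 1) - e(n - 2)\<close>. With \<open>b(n)\<close> and \<open>c(n)\<close> counting the cases \<open>P < Q\<close> and \<open>P \<ge> Q + 2\<close>:
  \<open>e(n) = b(n) + e(n - 1) + c(n)\<close>, \<open>b(n) = e(n - 1) + b(n - 1)\<close> and
  \<open>c(n) = e(n - 1) - e(n - 2) + c(n - 1)\<close>, whence \<open>e(n) = 4 e(n - 1) - 2 e(n - 2)\<close>.\<close>

section \<open>Inserting and removing list entries\<close>

definition remove_nth :: "'a list \<Rightarrow> nat \<Rightarrow> 'a list"
  where "remove_nth xs k = take k xs @ drop (Suc k) xs"

definition insert_nth :: "'a list \<Rightarrow> nat \<Rightarrow> 'a \<Rightarrow> 'a list"
  where "insert_nth xs i x = take i xs @ x # drop i xs"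

lemma length_remove_nth [simp]: "k < length xs \<Longrightarrow> length (remove_nth xs k) = length xs - 1"
  by (simp add: remove_nth_def)

lemma nth_remove_nth:
  "k < length xs \<Longrightarrow> t < length xs - 1 \<Longrightarrow> remove_nth xs k ! t = xs ! (if t < k then t else Suc t)"
  by (auto simp: remove_nth_def nth_append min_def)

lemma set_remove_nth:
  assumes "distinct xs" "k < length xs"
  shows "set (remove_nth xs k) = set xs - {xs ! k}"
proof -
  have "distinct (take k xs @ xs ! k # drop (Suc k) xs)"
    using assms id_take_nth_drop by metis
  moreover have "set xs = set (take k xs) \<union> insert (xs ! k) (set (drop (Suc k) xs))"
    using assms id_take_nth_drop by (metis list.simps(15) set_append)
  ultimately show ?thesis unfolding remove_nth_def by auto
qed

lemma distinct_remove_nth: "distinct xs \<Longrightarrow> distinct (remove_nth xs k)"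
  unfolding remove_nth_def using set_take_disj_set_drop_if_distinct[of xs k "Suc k"] by auto

lemma length_insert_nth [simp]: "i \<le> length xs \<Longrightarrow> length (insert_nth xs i x) = Suc (length xs)"
  by (simp add: insert_nth_def)

lemma nth_insert_nth:
  assumes "i \<le> length xs"
  shows "insert_nth xs i x ! t = (if t < i then xs ! t else if t = i then x else xs ! (t - 1))"
proof -
  consider "t < i" | "t = i" | "i < t" by linarith
  then show ?thesis
  proof cases
    case 3
    then have "insert_nth xs i x ! t = drop i xs ! (t - i - 1)"
      using assms by (simp add: insert_nth_def nth_append min_def nth_Cons')
    also have "\<dots> = xs ! (t - 1)"
      using assms 3 by (simp add: nth_drop)
    finally show ?thesis using 3 by simp
  qed (use assms in \<open>simp_all add: insert_nth_def nth_append\<close>)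
qed

lemma set_insert_nth: "set (insert_nth xs i x) = insert x (set xs)"
proof -
  have "set xs = set (take i xs) \<union> set (drop i xs)"
    by (metis append_take_drop_id set_append)
  then show ?thesis unfolding insert_nth_def by auto
qed

lemma distinct_insert_nth: "distinct (insert_nth xs i x) \<longleftrightarrow> distinct xs \<and> x \<notin> set xs"
proof -
  have split: "distinct xs \<longleftrightarrow>
      distinct (take i xs) \<and> distinct (drop i xs) \<and> set (take i xs) \<inter> set (drop i xs) = {}"
    by (metis append_take_drop_id distinct_append)
  have "set xs = set (take i xs) \<union> set (drop i xs)"
    by (metis append_take_drop_id set_append)
  then show ?thesis unfolding insert_nth_def distinct_append split by auto
qed

lemma remove_nth_insert_nth [simp]: "i \<le> length xs \<Longrightarrow> remove_nth (insert_nth xs i x) i = xs"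
  unfolding remove_nth_def insert_nth_def by (simp add: min_def)

lemma insert_nth_remove_nth:
  assumes "k < length xs"
  shows "insert_nth (remove_nth xs k) k (xs ! k) = xs"
proof -
  have "take k (remove_nth xs k) = take k xs" "drop k (remove_nth xs k) = drop (Suc k) xs"
    using assms unfolding remove_nth_def by (simp_all add: min_def)
  then show ?thesis
    unfolding insert_nth_def using id_take_nth_drop[OF assms] by simp
qed

lemma map_insert_nth: "i \<le> length xs \<Longrightarrow> map h (insert_nth xs i x) = insert_nth (map h xs) i (h x)"
  by (simp add: insert_nth_def take_map drop_map)

section \<open>Occurrences of the four patterns\<close>

definition occurs_at :: "(nat \<Rightarrow> nat \<Rightarrow> nat \<Rightarrow> nat \<Rightarrow> bool) \<Rightarrow> nat list \<Rightarrow> nat \<Rightarrow> nat \<Rightarrow> nat \<Rightarrow> nat \<Rightarrow> bool"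
  where "occurs_at R xs a b c d \<longleftrightarrow>
    a < b \<and> b < c \<and> c < d \<and> d < length xs \<and> R (xs ! a) (xs ! b) (xs ! c) (xs ! d)"

definition occurs :: "(nat \<Rightarrow> nat \<Rightarrow> nat \<Rightarrow> nat \<Rightarrow> bool) \<Rightarrow> nat list \<Rightarrow> bool"
  where "occurs R xs \<longleftrightarrow> (\<exists>a b c d. occurs_at R xs a b c d)"

definition order_2413 :: "nat \<Rightarrow> nat \<Rightarrow> nat \<Rightarrow> nat \<Rightarrow> bool"
  where "order_2413 p q r s \<longleftrightarrow> r < p \<and> p < s \<and> s < q"

definition order_4132 :: "nat \<Rightarrow> nat \<Rightarrow> nat \<Rightarrow> nat \<Rightarrow> bool"
  where "order_4132 p q r s \<longleftrightarrow> q < s \<and> s < r \<and> r < p"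

definition order_4213 :: "nat \<Rightarrow> nat \<Rightarrow> nat \<Rightarrow> nat \<Rightarrow> bool"
  where "order_4213 p q r s \<longleftrightarrow> r < q \<and> q < s \<and> s < p"

definition order_3214 :: "nat \<Rightarrow> nat \<Rightarrow> nat \<Rightarrow> nat \<Rightarrow> bool"
  where "order_3214 p q r s \<longleftrightarrow> r < q \<and> q < p \<and> p < s"

definition forbidden :: "(nat \<Rightarrow> nat \<Rightarrow> nat \<Rightarrow> nat \<Rightarrow> bool) set"
  where "forbidden = {order_2413, order_4132, order_4213, order_3214}"

lemmas forbidden_simps = forbidden_def order_2413_def order_4132_def order_4213_def order_3214_def

definition avoids_forbidden :: "nat list \<Rightarrow> bool"
  where "avoids_forbidden xs \<longleftrightarrow> (\<forall>R\<in>forbidden. \<not> occurs R xs)"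

lemma avoids_forbiddenD: "avoids_forbidden xs \<Longrightarrow> R \<in> forbidden \<Longrightarrow> \<not> occurs_at R xs a b c d"
  unfolding avoids_forbidden_def occurs_def by blast

lemma avoids_forbidden_short: "length xs < 4 \<Longrightarrow> avoids_forbidden xs"
  unfolding avoids_forbidden_def occurs_def occurs_at_def by auto

lemma forbidden_strict_mono_on_iff:
  assumes "R \<in> forbidden" "strict_mono_on A h" "p \<in> A" "q \<in> A" "r \<in> A" "s \<in> A"
  shows "R (h p) (h q) (h r) (h s) \<longleftrightarrow> R p q r s"
proof -
  have "h x < h y \<longleftrightarrow> x < y" if "x \<in> {p, q, r, s}" "y \<in> {p, q, r, s}" for x y
    using that assms(3-6) strict_mono_on_less[OF assms(2)] by blast
  then show ?thesis using assms(1) unfolding forbidden_simps by auto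
qed

lemma avoids_forbidden_map_strict_mono_on:
  assumes "strict_mono_on (set xs) h"
  shows "avoids_forbidden (map h xs) \<longleftrightarrow> avoids_forbidden xs"
proof -
  have "occurs_at R (map h xs) a b c d \<longleftrightarrow> occurs_at R xs a b c d"
    if "R \<in> forbidden" for R a b c d
  proof (cases "a < b \<and> b < c \<and> c < d \<and> d < length xs")
    case True
    then show ?thesis
      using forbidden_strict_mono_on_iff[OF that assms] unfolding occurs_at_def by simp
  qed (auto simp: occurs_at_def)
  then show ?thesis unfolding avoids_forbidden_def occurs_def by blast
qed

lemma forbidden_no_adjacent_consecutive_ascent:
  "R \<in> forbidden \<Longrightarrow> R p q r s \<Longrightarrow> q \<noteq> Suc p \<and> r \<noteq> Suc q \<and> s \<noteq> Suc r"
  unfolding forbidden_simps by auto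

lemma forbidden_top_two_not_adjacent_descent:
  "R \<in> forbidden \<Longrightarrow> R p q r s \<Longrightarrow>
    \<not> (q < p \<and> r < q \<and> s < q) \<and> \<not> (r < q \<and> p < r \<and> s < r) \<and> \<not> (s < r \<and> p < s \<and> q < s)"
  unfolding forbidden_simps by auto

text \<open>The second largest entry never precedes the largest one at distance one or two.\<close>

lemma forbidden_top_two_not_close_ascent:
  "R \<in> forbidden \<Longrightarrow> R p q r s \<Longrightarrow>
    \<not> (p < q \<and> r < p \<and> s < p) \<and> \<not> (q < r \<and> p < q \<and> s < q) \<and> \<not> (r < s \<and> p < r \<and> q < r) \<and>
    \<not> (p < r \<and> q < p \<and> s < p) \<and> \<not> (q < s \<and> p < q \<and> r < q)"
  unfolding forbidden_simps by auto

lemma occurs_remove_nth: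
  assumes "k < length xs" "occurs R (remove_nth xs k)"
  shows "occurs R xs"
proof -
  obtain a b c d where occ: "occurs_at R (remove_nth xs k) a b c d"
    using assms(2) occurs_def by blast
  define f where "f t = (if t < k then t else Suc t)" for t
  have "remove_nth xs k ! t = xs ! f t" if "t < length xs - 1" for t
    using assms(1) that by (simp add: nth_remove_nth f_def)
  moreover have "d < length xs - 1"
    using occ assms(1) by (simp add: occurs_at_def)
  ultimately have "occurs_at R xs (f a) (f b) (f c) (f d)"
    using occ unfolding occurs_at_def by (auto simp: f_def)
  then show ?thesis unfolding occurs_def by blast
qed

lemma avoids_forbidden_remove_nth:
  "k < length xs \<Longrightarrow> avoids_forbidden xs \<Longrightarrow> avoids_forbidden (remove_nth xs k)"
  using occurs_remove_nth unfolding avoids_forbidden_def by blast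

lemma occurs_at_uses_removed:
  assumes occ: "occurs_at R xs a b c d" and "k < length xs" and "\<not> occurs R (remove_nth xs k)"
  shows "k \<in> {a, b, c, d}"
proof (rule ccontr)
  assume k: "k \<notin> {a, b, c, d}"
  define f where "f t = (if t < k then t else t - 1)" for t
  have idx: "f a < f b" "f b < f c" "f c < f d" "f d < length xs - 1"
    using occ k assms(2) unfolding occurs_at_def f_def by auto
  have "remove_nth xs k ! f t = xs ! t" if "t \<in> {a, b, c, d}" for t
    using assms(2) that k occ by (auto simp: nth_remove_nth f_def occurs_at_def)
  then have "occurs_at R (remove_nth xs k) (f a) (f b) (f c) (f d)"
    using occ idx assms(2) unfolding occurs_at_def by simp
  with assms(3) show False unfolding occurs_def by blast
qed

lemma avoids_forbidden_by_removals:
  assumes "i < length w" "j < length w"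
    and "avoids_forbidden (remove_nth w i)" "avoids_forbidden (remove_nth w j)"
    and "\<And>R a b c d. R \<in> forbidden \<Longrightarrow> occurs_at R w a b c d \<Longrightarrow>
           i \<in> {a, b, c, d} \<Longrightarrow> j \<in> {a, b, c, d} \<Longrightarrow> False"
  shows "avoids_forbidden w"
  unfolding avoids_forbidden_def occurs_def
proof (intro ballI notI, elim exE)
  fix R a b c d
  assume R: "R \<in> forbidden" and occ: "occurs_at R w a b c d"
  have "\<not> occurs R (remove_nth w i)" "\<not> occurs R (remove_nth w j)"
    using assms(3,4) R unfolding avoids_forbidden_def by blast+
  then show False
    using assms(5)[OF R occ] occurs_at_uses_removed[OF occ] assms(1,2) by blast
qed

lemma avoids_forbidden_insert_nth_max_iff:
  assumes "\<forall>z\<in>set v. z < M" "\<forall>z\<in>set v. z < N" "i \<le> length v"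
  shows "avoids_forbidden (insert_nth v i M) \<longleftrightarrow> avoids_forbidden (insert_nth v i N)"
proof -
  have *: "avoids_forbidden (insert_nth v i M)"
    if "\<forall>z\<in>set v. z < M" "\<forall>z\<in>set v. z < N" "avoids_forbidden (insert_nth v i N)" for M N
  proof -
    define h where "h z = (if z = N then M else z)" for z
    have "map h v = v" using that(2) unfolding h_def by (induction v) auto
    then have "map h (insert_nth v i N) = insert_nth v i M"
      using assms(3) by (simp add: map_insert_nth h_def)
    moreover have "strict_mono_on (set (insert_nth v i N)) h"
      using that(1,2) by (auto simp: strict_mono_on_def h_def set_insert_nth)
    ultimately show ?thesis
      using that(3) avoids_forbidden_map_strict_mono_on by metis
  qed
  show ?thesis using *[of M N] *[of N M] assms(1,2) by blast
qed

section \<open>Local changes that preserve avoidance\<close>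

definition shift_down :: "nat \<Rightarrow> nat \<Rightarrow> nat"
  where "shift_down x z = (if x < z then z - 1 else z)"

definition shift_up :: "nat \<Rightarrow> nat \<Rightarrow> nat"
  where "shift_up x z = (if x < z then Suc z else z)"

lemma strict_mono_on_shift_down:
  assumes "x \<notin> A"
  shows "strict_mono_on A (shift_down x)"
  unfolding strict_mono_on_def
proof (intro allI impI)
  fix r s assume rs: "r \<in> A \<and> s \<in> A \<and> r < s"
  then have "r \<noteq> x" "s \<noteq> x" using assms by auto
  with rs show "shift_down x r < shift_down x s" by (auto simp: shift_down_def)
qed

lemma strict_mono_shift_up: "strict_mono (shift_up x)"
  by (auto simp: strict_mono_def shift_up_def)

definition delete_entry :: "nat list \<Rightarrow> nat \<Rightarrow> nat list"
  where "delete_entry w k = map (shift_down (w ! k)) (remove_nth w k)"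

text \<open>\<open>split_entry u i\<close> replaces the entry \<open>x = u ! i\<close> by the two adjacent entries
  \<open>x, x + 1\<close>, shifting the larger values up.\<close>

definition split_entry :: "nat list \<Rightarrow> nat \<Rightarrow> nat list"
  where "split_entry u i = insert_nth (map (shift_up (u ! i)) u) (Suc i) (Suc (u ! i))"

lemma length_delete_entry [simp]: "k < length w \<Longrightarrow> length (delete_entry w k) = length w - 1"
  by (simp add: delete_entry_def)

lemma nth_delete_entry:
  "k < length w \<Longrightarrow> t < length w - 1 \<Longrightarrow>
    delete_entry w k ! t = shift_down (w ! k) (w ! (if t < k then t else Suc t))"
  by (simp add: delete_entry_def nth_remove_nth)

lemma length_split_entry [simp]: "i < length u \<Longrightarrow> length (split_entry u i) = Suc (length u)"
  by (simp add: split_entry_def)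

lemma nth_split_entry:
  "i < length u \<Longrightarrow> t \<le> length u \<Longrightarrow> split_entry u i ! t =
    (if t \<le> i then shift_up (u ! i) (u ! t)
     else if t = Suc i then Suc (u ! i) else shift_up (u ! i) (u ! (t - 1)))"
  by (auto simp: split_entry_def nth_insert_nth)

lemma avoids_forbidden_delete_entry:
  assumes "avoids_forbidden w" "distinct w" "k < length w"
  shows "avoids_forbidden (delete_entry w k)"
proof -
  have "w ! k \<notin> set (remove_nth w k)"
    using set_remove_nth[OF assms(2,3)] by simp
  then have "strict_mono_on (set (remove_nth w k)) (shift_down (w ! k))"
    by (rule strict_mono_on_shift_down)
  then show ?thesis
    unfolding delete_entry_def
    using avoids_forbidden_map_strict_mono_on avoids_forbidden_remove_nth assms(1,3) by blast
qed

lemma avoids_forbidden_split_entry: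
  assumes "avoids_forbidden u" "distinct u" "i < length u"
  shows "avoids_forbidden (split_entry u i)"
proof -
  define x where "x = u ! i"
  define w where "w = split_entry u i"
  define h where "h z = (if z = x then Suc x else shift_up x z)" for z
  have len: "length w = Suc (length u)" using assms(3) by (simp add: w_def)
  have ne: "u ! t \<noteq> x" if "t < length u" "t \<noteq> i" for t
    using assms(2,3) that unfolding x_def by (simp add: nth_eq_iff_index_eq)
  have "remove_nth w (Suc i) = map (shift_up x) u"
    using assms(3) by (simp add: w_def split_entry_def x_def)
  moreover have "strict_mono_on (set u) (shift_up x)"
    by (auto simp: strict_mono_on_def shift_up_def)
  ultimately have avoid1: "avoids_forbidden (remove_nth w (Suc i))"
    using assms(1) avoids_forbidden_map_strict_mono_on by simp
  have "remove_nth w i = map h u"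
  proof (rule nth_equalityI)
    show "length (remove_nth w i) = length (map h u)" using len assms(3) by simp
    fix t assume "t < length (remove_nth w i)"
    then have t: "t < length u" using len assms(3) by simp
    show "remove_nth w i ! t = map h u ! t"
      using t assms(3) ne[of t] len
      by (auto simp: nth_remove_nth w_def nth_split_entry h_def x_def)
  qed
  moreover have "strict_mono_on (set u) h"
    by (auto simp: strict_mono_on_def h_def shift_up_def)
  ultimately have avoid2: "avoids_forbidden (remove_nth w i)"
    using assms(1) avoids_forbidden_map_strict_mono_on by simp
  have at_ends: "w ! i = x" "w ! Suc i = Suc x"
    using assms(3) by (simp_all add: w_def nth_split_entry shift_up_def x_def)
  show ?thesis
    unfolding w_def[symmetric]
  proof (rule avoids_forbidden_by_removals[OF _ _ avoid2 avoid1])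
    fix R a b c d
    assume R: "R \<in> forbidden" and occ: "occurs_at R w a b c d"
      and "i \<in> {a, b, c, d}" "Suc i \<in> {a, b, c, d}"
    moreover have "a < b" "b < c" "c < d" and RR: "R (w ! a) (w ! b) (w ! c) (w ! d)"
      using occ by (auto simp: occurs_at_def)
    ultimately have "(a = i \<and> b = Suc i) \<or> (b = i \<and> c = Suc i) \<or> (c = i \<and> d = Suc i)"
      by auto
    then show False using forbidden_no_adjacent_consecutive_ascent[OF R RR] at_ends by auto
  qed (use assms(3) len in auto)
qed

lemma avoids_forbidden_insert_before_max:
  assumes "avoids_forbidden u" "distinct u" "p < length u" "\<forall>z\<in>set u. z \<le> u ! p" "u ! p < N"
  shows "avoids_forbidden (insert_nth u p N)"
proof -
  define M where "M = u ! p"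
  define w where "w = insert_nth u p N"
  define h where "h z = (if z = M then N else z)" for z
  have len: "length w = Suc (length u)" using assms(3) by (simp add: w_def)
  have nth_w: "w ! t = (if t < p then u ! t else if t = p then N else u ! (t - 1))" for t
    using assms(3) by (simp add: w_def nth_insert_nth)
  have below: "u ! t < M" if "t < length u" "t \<noteq> p" for t
    using assms(2-4) that unfolding M_def
    by (metis nth_eq_iff_index_eq nth_mem order_le_imp_less_or_eq)
  have avoid1: "avoids_forbidden (remove_nth w p)"
    using assms(1,3) by (simp add: w_def)
  have "remove_nth w (Suc p) = map h u"
  proof (rule nth_equalityI)
    show "length (remove_nth w (Suc p)) = length (map h u)" using len assms(3) by simp
    fix t assume "t < length (remove_nth w (Suc p))"
    then have t: "t < length u" using len assms(3) by simp
    show "remove_nth w (Suc p) ! t = map h u ! t"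
      using t assms(3) below[of t] len
      by (cases "t < p"; cases "t = p"; auto simp: nth_remove_nth nth_w h_def M_def)
  qed
  moreover have "strict_mono_on (set u) h"
    using assms(4,5) unfolding strict_mono_on_def h_def M_def by auto
  ultimately have avoid2: "avoids_forbidden (remove_nth w (Suc p))"
    using assms(1) avoids_forbidden_map_strict_mono_on by simp
  have at_ends: "w ! p = N" "w ! Suc p = M" "M < N"
    using nth_w assms(5) M_def by auto
  have others: "w ! t < M" if "t < length w" "t \<noteq> p" "t \<noteq> Suc p" for t
    using below that len assms(3) by (auto simp: nth_w)
  show ?thesis
    unfolding w_def[symmetric]
  proof (rule avoids_forbidden_by_removals[OF _ _ avoid1 avoid2])
    fix R a b c d
    assume R: "R \<in> forbidden" and occ: "occurs_at R w a b c d"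
      and "p \<in> {a, b, c, d}" "Suc p \<in> {a, b, c, d}"
    moreover have ord: "a < b" "b < c" "c < d" "d < length w"
      and RR: "R (w ! a) (w ! b) (w ! c) (w ! d)"
      using occ by (auto simp: occurs_at_def)
    ultimately have "(a = p \<and> b = Suc p) \<or> (b = p \<and> c = Suc p) \<or> (c = p \<and> d = Suc p)"
      by auto
    then show False
      using forbidden_top_two_not_adjacent_descent[OF R RR] at_ends ord
        others[of a] others[of b] others[of c] others[of d]
      by auto
  qed (use assms(3) len in auto)
qed

text \<open>\<open>wrap v i M N\<close> inserts \<open>M\<close> before and \<open>N\<close> after the entry \<open>v ! i\<close>.\<close>

definition wrap :: "nat list \<Rightarrow> nat \<Rightarrow> nat \<Rightarrow> nat \<Rightarrow> nat list"
  where "wrap v i M N = insert_nth (insert_nth v i M) (Suc (Suc i)) N"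

lemma wrap_conv_take_drop:
  assumes "i < length v"
  shows "wrap v i M N = take i v @ M # v ! i # N # drop (Suc i) v"
proof -
  have "drop i v = v ! i # drop (Suc i) v"
    using Cons_nth_drop_Suc[OF assms] by simp
  then show ?thesis
    unfolding wrap_def insert_nth_def using assms by (simp add: min_def)
qed

lemma length_wrap [simp]: "i < length v \<Longrightarrow> length (wrap v i M N) = length v + 2"
  by (simp add: wrap_def)

lemma nth_wrap:
  assumes "i < length v"
  shows "wrap v i M N ! t =
    (if t < i then v ! t else if t = i then M else if t = Suc i then v ! i
     else if t = Suc (Suc i) then N else v ! (t - 2))"
proof -
  have "Suc (t - 3) = t - 2" if "Suc (Suc i) < t" using that by simp
  then show ?thesis
    using assms by (auto simp: wrap_conv_take_drop nth_append min_def nth_Cons' numeral_2_eq_2)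
qed

lemma remove_nth_wrap_right: "i < length v \<Longrightarrow> remove_nth (wrap v i M N) (Suc (Suc i)) = insert_nth v i M"
  by (simp add: wrap_def)

lemma remove_nth_wrap_left:
  "i < length v \<Longrightarrow> remove_nth (wrap v i M N) i = insert_nth v (Suc i) N"
  by (simp add: wrap_conv_take_drop remove_nth_def insert_nth_def take_Suc_conv_app_nth min_def)

lemma avoids_forbidden_wrap:
  assumes "distinct v" "i < length v" "\<forall>z\<in>set v. z < M" "M < N"
    and "avoids_forbidden (insert_nth v i M)" "avoids_forbidden (insert_nth v (Suc i) M)"
  shows "avoids_forbidden (wrap v i M N)"
proof -
  define w where "w = wrap v i M N"
  have len: "length w = length v + 2" using assms(2) by (simp add: w_def)
  have avoid1: "avoids_forbidden (remove_nth w (Suc (Suc i)))"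
    using assms(2,5) by (simp add: w_def remove_nth_wrap_right)
  have "avoids_forbidden (insert_nth v (Suc i) N)"
    using avoids_forbidden_insert_nth_max_iff[of v M N "Suc i"] assms(2-4,6) by fastforce
  then have avoid2: "avoids_forbidden (remove_nth w i)"
    using assms(2) by (simp add: w_def remove_nth_wrap_left)
  have at_ends: "w ! i = M" "w ! Suc (Suc i) = N"
    using assms(2) by (simp_all add: w_def nth_wrap)
  have others: "w ! t < M" if "t < length w" "t \<noteq> i" "t \<noteq> Suc (Suc i)" for t
    using that len assms(2,3) by (auto simp: w_def nth_wrap)
  show ?thesis
    unfolding w_def[symmetric]
  proof (rule avoids_forbidden_by_removals[OF _ _ avoid2 avoid1])
    fix R a b c d
    assume R: "R \<in> forbidden" and occ: "occurs_at R w a b c d"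
      and "i \<in> {a, b, c, d}" "Suc (Suc i) \<in> {a, b, c, d}"
    moreover have ord: "a < b" "b < c" "c < d" "d < length w"
      and RR: "R (w ! a) (w ! b) (w ! c) (w ! d)"
      using occ by (auto simp: occurs_at_def)
    ultimately have "(a = i \<and> b = Suc (Suc i)) \<or> (a = i \<and> c = Suc (Suc i)) \<or>
        (b = i \<and> c = Suc (Suc i)) \<or> (b = i \<and> d = Suc (Suc i)) \<or> (c = i \<and> d = Suc (Suc i))"
      by auto
    then show False
    proof (elim disjE conjE)
      assume "a = i" "b = Suc (Suc i)"
      then show False
        using forbidden_top_two_not_close_ascent[OF R RR] at_ends ord assms(4) others[of c] others[of d]
        by auto
    next
      assume "a = i" "c = Suc (Suc i)"
      then show False
        using forbidden_top_two_not_close_ascent[OF R RR] at_ends ord assms(4) others[of b] others[of d]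
        by auto
    next
      assume "b = i" "c = Suc (Suc i)"
      then show False
        using forbidden_top_two_not_close_ascent[OF R RR] at_ends ord assms(4) others[of a] others[of d]
        by auto
    next
      assume "b = i" "d = Suc (Suc i)"
      then show False
        using forbidden_top_two_not_close_ascent[OF R RR] at_ends ord assms(4) others[of a] others[of c]
        by auto
    next
      assume "c = i" "d = Suc (Suc i)"
      then show False
        using forbidden_top_two_not_close_ascent[OF R RR] at_ends ord assms(4) others[of a] others[of b]
        by auto
    qed
  qed (use assms(2) len in auto)
qed

lemma occurs_at_insert_max_uses_max:
  assumes "\<forall>z\<in>set v. z < N" "k \<le> length v" "avoids_forbidden v"
    and "R \<in> forbidden" "occurs_at R (insert_nth v k N) a b c d"
  shows "k \<in> {a, b, c, d}"
    and "t \<in> {a, b, c, d} \<Longrightarrow> t \<noteq> k \<Longrightarrow> insert_nth v k N ! t < insert_nth v k N ! k"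
proof -
  have "\<not> occurs R (remove_nth (insert_nth v k N) k)"
    using assms(2-4) by (simp add: avoids_forbidden_def)
  then show "k \<in> {a, b, c, d}"
    using occurs_at_uses_removed[OF assms(5)] assms(2) by simp
  assume t: "t \<in> {a, b, c, d}" "t \<noteq> k"
  then have "t < Suc (length v)"
    using assms(2,5) by (auto simp: occurs_at_def)
  then show "insert_nth v k N ! t < insert_nth v k N ! k"
    using t(2) assms(1,2) nth_mem[of t v] nth_mem[of "t - 1" v] by (auto simp: nth_insert_nth)
qed

text \<open>The maximum plays the role of the 4 in every occurrence. So an occurrence through the
  maximum inserted at \<open>k\<close> moves to one through the maximum inserted at \<open>i\<close> (the 4 of 4132 or
  4213 moved left; the 4 of 2413 moved left, past the 2 if necessary, giving 2413 or 4213)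
  or at \<open>j\<close> (the 4 of 3214 moved right).\<close>

lemma avoids_forbidden_insert_max_between:
  assumes "distinct v" "\<forall>z\<in>set v. z < N" "i < k" "k < j" "j \<le> length v"
    and "avoids_forbidden v" "avoids_forbidden (insert_nth v i N)"
    and "avoids_forbidden (insert_nth v j N)"
  shows "avoids_forbidden (insert_nth v k N)"
proof (rule ccontr)
  define w where "w = insert_nth v k N"
  assume "\<not> avoids_forbidden (insert_nth v k N)"
  then obtain R a b c d where R: "R \<in> forbidden" and occ: "occurs_at R w a b c d"
    unfolding avoids_forbidden_def occurs_def w_def by blast
  have k: "k \<in> {a, b, c, d}" and top: "\<And>t. t \<in> {a, b, c, d} \<Longrightarrow> t \<noteq> k \<Longrightarrow> w ! t < w ! k"
    using occurs_at_insert_max_uses_max[OF assms(2) _ assms(6) R occ[unfolded w_def]] assms(4,5)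
    unfolding w_def by simp_all
  have len: "length w = Suc (length v)" "length (insert_nth v i N) = Suc (length v)"
    "length (insert_nth v j N) = Suc (length v)"
    using assms(3-5) by (simp_all add: w_def)
  have nth_w: "w ! t = (if t < k then v ! t else if t = k then N else v ! (t - 1))" for t
    using assms(4,5) by (simp add: w_def nth_insert_nth)
  have nth_i: "insert_nth v i N ! t = (if t < i then v ! t else if t = i then N else v ! (t - 1))"
    for t using assms(3-5) by (simp add: nth_insert_nth)
  have nth_j: "insert_nth v j N ! t = (if t < j then v ! t else if t = j then N else v ! (t - 1))"
    for t using assms(5) by (simp add: nth_insert_nth)
  have ord: "a < b" "b < c" "c < d" "d < length w" and RR: "R (w ! a) (w ! b) (w ! c) (w ! d)"
    using occ by (auto simp: occurs_at_def)
  have "w ! k = N" by (simp add: nth_w)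
  from R consider "R = order_2413" | "R = order_4132" | "R = order_4213" | "R = order_3214"
    unfolding forbidden_def by blast
  then show False
  proof cases
    case 1
    then have "k = b" using k top RR unfolding order_2413_def by fastforce
    show False
    proof (cases "a < i")
      case True
      then have "occurs_at order_2413 (insert_nth v i N) a i c d"
        using 1 ord RR \<open>k = b\<close> assms(3,4) len unfolding occurs_at_def order_2413_def
        by (auto simp: nth_w nth_i)
      then show False using assms(7) avoids_forbiddenD by (simp add: forbidden_def)
    next
      case False
      then have "occurs_at order_4213 (insert_nth v i N) i (Suc a) c d"
        using 1 ord RR \<open>k = b\<close> assms(3,4) len \<open>w ! k = N\<close>
        unfolding occurs_at_def order_2413_def order_4213_def by (auto simp: nth_w nth_i)
      then show False using assms(7) avoids_forbiddenD by (simp add: forbidden_def)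
    qed
  next
    case 2
    then have "k = a" using k top RR unfolding order_4132_def by fastforce
    then have "occurs_at order_4132 (insert_nth v i N) i b c d"
      using 2 ord RR assms(3,4) len unfolding occurs_at_def order_4132_def
      by (auto simp: nth_w nth_i)
    then show False using assms(7) avoids_forbiddenD by (simp add: forbidden_def)
  next
    case 3
    then have "k = a" using k top RR unfolding order_4213_def by fastforce
    then have "occurs_at order_4213 (insert_nth v i N) i b c d"
      using 3 ord RR assms(3,4) len unfolding occurs_at_def order_4213_def
      by (auto simp: nth_w nth_i)
    then show False using assms(7) avoids_forbiddenD by (simp add: forbidden_def)
  next
    case 4
    then have "k = d" using k top RR unfolding order_3214_def by fastforce
    then have "occurs_at order_3214 (insert_nth v j N) a b c j"
      using 4 ord RR assms(3-5) len unfolding occurs_at_def order_3214_def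
      by (auto simp: nth_w nth_j)
    then show False using assms(8) avoids_forbiddenD by (simp add: forbidden_def)
  qed
qed

section \<open>Counting avoiders by the positions of the two largest entries\<close>

definition Av :: "nat \<Rightarrow> nat list set"
  where "Av n = {w. distinct w \<and> set w = {1..n} \<and> avoids_forbidden w}"

lemma length_if_set_eq_interval: "distinct w \<Longrightarrow> set w = {1..n} \<Longrightarrow> length w = n"
  by (metis card_atLeastAtMost diff_Suc_1 distinct_card)

lemma set_eq_interval_if_subset:
  "distinct w \<Longrightarrow> length w = n \<Longrightarrow> set w \<subseteq> {1..n} \<Longrightarrow> set w = {1..n}"
  by (metis card_atLeastAtMost card_subset_eq diff_Suc_1 distinct_card finite_atLeastAtMost)

lemma AvD:
  assumes "w \<in> Av n"
  shows "distinct w" "set w = {1..n}" "avoids_forbidden w" "length w = n"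
  using assms length_if_set_eq_interval unfolding Av_def by auto

lemma AvI: "distinct w \<Longrightarrow> set w = {1..n} \<Longrightarrow> avoids_forbidden w \<Longrightarrow> w \<in> Av n"
  unfolding Av_def by simp

lemma Av_nth_in_interval: "w \<in> Av n \<Longrightarrow> t < n \<Longrightarrow> w ! t \<in> {1..n}"
  using AvD nth_mem by metis

lemma Av_nth_inject: "w \<in> Av n \<Longrightarrow> s < n \<Longrightarrow> t < n \<Longrightarrow> w ! s = w ! t \<longleftrightarrow> s = t"
  using AvD nth_eq_iff_index_eq by metis

lemma finite_Av: "finite (Av n)"
proof (rule finite_subset)
  show "Av n \<subseteq> {xs. set xs \<subseteq> {1..n} \<and> length xs = n}"
    using AvD by blast
  show "finite {xs. set xs \<subseteq> {1..n} \<and> length xs = n}"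
    by (rule finite_lists_length_eq) simp
qed

lemma Av_delete_entry:
  assumes "w \<in> Av n" "k < n"
  shows "delete_entry w k \<in> Av (n - 1)"
proof (rule AvI)
  define x where "x = w ! k"
  have set_rem: "set (remove_nth w k) = {1..n} - {x}"
    using set_remove_nth[of w k] AvD[OF assms(1)] assms(2) unfolding x_def by simp
  have mono: "strict_mono_on (set (remove_nth w k)) (shift_down x)"
    by (rule strict_mono_on_shift_down) (simp add: set_rem)
  show "distinct (delete_entry w k)"
    using strict_mono_on_imp_inj_on[OF mono] distinct_remove_nth AvD(1)[OF assms(1)]
    unfolding delete_entry_def x_def[symmetric] by (simp add: distinct_map)
  moreover have "set (delete_entry w k) \<subseteq> {1..n - 1}"
    unfolding delete_entry_def x_def[symmetric] set_map set_rem
    using Av_nth_in_interval[OF assms] x_def by (auto simp: shift_down_def)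
  ultimately show "set (delete_entry w k) = {1..n - 1}"
    using assms AvD(4)[OF assms(1)] by (simp add: set_eq_interval_if_subset)
  show "avoids_forbidden (delete_entry w k)"
    using avoids_forbidden_delete_entry AvD[OF assms(1)] assms(2) by simp
qed

lemma Av_split_entry:
  assumes "u \<in> Av m" "i < m"
  shows "split_entry u i \<in> Av (Suc m)"
proof (rule AvI)
  define x where "x = u ! i"
  have x: "x \<in> {1..m}" using Av_nth_in_interval[OF assms] x_def by simp
  have "Suc x \<notin> shift_up x ` set u"
    by (auto simp: shift_up_def)
  then show "distinct (split_entry u i)"
    using strict_mono_imp_inj_on[OF strict_mono_shift_up] AvD(1)[OF assms(1)]
    unfolding split_entry_def x_def[symmetric] by (simp add: distinct_insert_nth distinct_map)
  moreover have "set (split_entry u i) \<subseteq> {1..Suc m}"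
    using AvD(2,4)[OF assms(1)] assms(2) x
    unfolding split_entry_def x_def[symmetric] by (auto simp: set_insert_nth shift_up_def)
  ultimately show "set (split_entry u i) = {1..Suc m}"
    using AvD(4)[OF assms(1)] assms(2) by (simp add: set_eq_interval_if_subset)
  show "avoids_forbidden (split_entry u i)"
    using avoids_forbidden_split_entry AvD[OF assms(1)] assms(2) by simp
qed

lemma delete_entry_split_entry:
  assumes "distinct u" "i < length u"
  shows "delete_entry (split_entry u i) i = u"
proof (rule nth_equalityI)
  show "length (delete_entry (split_entry u i) i) = length u" using assms by simp
  fix t assume "t < length (delete_entry (split_entry u i) i)"
  then have t: "t < length u" using assms by simp
  have "t \<noteq> i \<Longrightarrow> u ! t \<noteq> u ! i" using assms t nth_eq_iff_index_eq by blast
  then show "delete_entry (split_entry u i) i ! t = u ! t"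
    using assms t
    by (cases "t < i"; cases "t = i";
        auto simp: nth_delete_entry nth_split_entry shift_down_def shift_up_def)
qed

lemma split_entry_delete_entry:
  assumes "distinct w" "Suc k < length w" "w ! Suc k = Suc (w ! k)"
  shows "split_entry (delete_entry w k) k = w"
proof (rule nth_equalityI)
  show "length (split_entry (delete_entry w k) k) = length w" using assms by simp
  fix t assume "t < length (split_entry (delete_entry w k) k)"
  then have t: "t < length w" using assms by simp
  have ne: "t \<noteq> k \<Longrightarrow> w ! t \<noteq> w ! k" "t \<noteq> Suc k \<Longrightarrow> w ! t \<noteq> w ! Suc k"
    using assms t nth_eq_iff_index_eq[OF assms(1) t, of k]
      nth_eq_iff_index_eq[OF assms(1) t, of "Suc k"] by auto
  have at_k: "delete_entry w k ! k = w ! k"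
    using assms by (simp add: nth_delete_entry shift_down_def)
  show "split_entry (delete_entry w k) k ! t = w ! t"
  proof (cases "t \<le> k")
    case True
    then show ?thesis
      using assms t ne at_k by (auto simp: nth_split_entry nth_delete_entry shift_down_def shift_up_def)
  next
    case False
    then show ?thesis
      using assms t ne at_k
      by (cases "t = Suc k"; auto simp: nth_split_entry nth_delete_entry shift_down_def shift_up_def)
  qed
qed

lemma nth_delete_entry_above:
  assumes "w \<in> Av n" "k < n" "t < n" "w ! k < w ! t"
  shows "delete_entry w k ! (if t < k then t else t - 1) = w ! t - 1"
proof -
  have "t \<noteq> k" using assms(4) by auto
  then show ?thesis
    using assms AvD(4)[OF assms(1)] by (auto simp: nth_delete_entry shift_down_def)
qed

lemma nth_split_entry_above:
  assumes "i < length u" "t < length u" "u ! i < u ! t"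
  shows "split_entry u i ! (if t < i then t else Suc t) = Suc (u ! t)"
proof -
  have "t \<noteq> i" using assms(3) by auto
  then show ?thesis
    using assms by (auto simp: nth_split_entry shift_up_def)
qed

fun pos :: "'a \<Rightarrow> 'a list \<Rightarrow> nat"
  where
    "pos x [] = 0"
  | "pos x (y # ys) = (if y = x then 0 else Suc (pos x ys))"

lemma pos_less_length: "x \<in> set w \<Longrightarrow> pos x w < length w"
  by (induction w) auto

lemma nth_pos: "x \<in> set w \<Longrightarrow> w ! pos x w = x"
  by (induction w) auto

lemma pos_eqI: "distinct w \<Longrightarrow> i < length w \<Longrightarrow> w ! i = x \<Longrightarrow> pos x w = i"
proof (induction w arbitrary: i)
  case (Cons y ys)
  then show ?case by (cases i) auto
qed simp

lemma Av_pos: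
  assumes "w \<in> Av n" "x \<in> {1..n}"
  shows "pos x w < n" "w ! pos x w = x"
  using pos_less_length[of x w] nth_pos[of x w] AvD(2,4)[OF assms(1)] assms(2) by simp_all

lemma Av_pos_eqI: "w \<in> Av n \<Longrightarrow> i < n \<Longrightarrow> w ! i = x \<Longrightarrow> pos x w = i"
  using pos_eqI AvD by metis

lemma Av_not_occurs_at: "w \<in> Av n \<Longrightarrow> R \<in> forbidden \<Longrightarrow> \<not> occurs_at R w a b c d"
  using AvD(3) avoids_forbiddenD by blast

text \<open>Otherwise the entry \<open>x + 1\<close> completes an occurrence of 2413 (if it comes first) or of
  4132 (if it comes last).\<close>

lemma Av_ascent_after_larger_entry:
  assumes "w \<in> Av n" "Suc (Suc s) < n"
    and "w ! Suc s < w ! Suc (Suc s)" "w ! Suc (Suc s) < w ! s"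
  shows "w ! Suc (Suc s) = Suc (w ! Suc s)"
proof (rule ccontr)
  define x where "x = w ! Suc s"
  define y where "y = w ! Suc (Suc s)"
  assume "w ! Suc (Suc s) \<noteq> Suc (w ! Suc s)"
  then have xy: "Suc x < y" using assms(3) unfolding x_def y_def by simp
  have "y \<le> n" using Av_nth_in_interval[OF assms(1,2)] y_def by simp
  then have "Suc x \<in> set w" using AvD(2)[OF assms(1)] xy by simp
  then obtain t where t: "t < n" "w ! t = Suc x"
    using AvD(4)[OF assms(1)] by (metis in_set_conv_nth)
  have "t \<noteq> s" "t \<noteq> Suc s" "t \<noteq> Suc (Suc s)"
    using t xy assms(4) unfolding x_def y_def by auto
  then consider "t < s" | "Suc (Suc s) < t" by linarith
  then show False
  proof cases
    case 1
    then have "occurs_at order_2413 w t s (Suc s) (Suc (Suc s))"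
      using t xy assms(2,4) AvD(4)[OF assms(1)]
      unfolding occurs_at_def order_2413_def x_def y_def by auto
    then show False using Av_not_occurs_at[OF assms(1)] by (simp add: forbidden_def)
  next
    case 2
    then have "occurs_at order_4132 w s (Suc s) (Suc (Suc s)) t"
      using t xy assms(2,4) AvD(4)[OF assms(1)]
      unfolding occurs_at_def order_4132_def x_def y_def by auto
    then show False using Av_not_occurs_at[OF assms(1)] by (simp add: forbidden_def)
  qed
qed

text \<open>If the two entries following \<open>n\<close> formed a descent, they would form 4213 with \<open>n\<close> and
  \<open>n - 1\<close>.\<close>

lemma Av_ascent_after_max:
  assumes "w \<in> Av n" "P < n" "Q < n" "w ! P = n" "w ! Q = n - 1" "Suc (Suc P) \<le> Q"
  shows "w ! Suc (Suc P) = Suc (w ! Suc P)"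
proof -
  define x where "x = w ! Suc P"
  define y where "y = w ! Suc (Suc P)"
  have inj: "w ! i = w ! j \<longleftrightarrow> i = j" if "i < n" "j < n" for i j
    using Av_nth_inject[OF assms(1) that] .
  have "x \<noteq> n" "x \<noteq> n - 1" "x \<in> {1..n}"
    using inj[of "Suc P" P] inj[of "Suc P" Q] Av_nth_in_interval[OF assms(1), of "Suc P"] assms
    unfolding x_def by simp_all
  then have x: "x < n - 1" by auto
  have "y \<noteq> n" "y \<noteq> x" "y \<in> {1..n}"
    using inj[of "Suc (Suc P)" P] inj[of "Suc (Suc P)" "Suc P"]
      Av_nth_in_interval[OF assms(1), of "Suc (Suc P)"] assms
    unfolding x_def y_def by simp_all
  then have y: "y < n" "y \<noteq> x" by auto
  have "x < y"
  proof (rule ccontr)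
    assume "\<not> x < y"
    then have "y < x" using y by simp
    moreover have "Q \<noteq> Suc (Suc P)" using \<open>y < x\<close> assms(5) x unfolding y_def by auto
    ultimately have "Suc (Suc P) < Q" using assms(6) by simp
    then have "occurs_at order_4213 w P (Suc P) (Suc (Suc P)) Q"
      using \<open>y < x\<close> x assms(3-5) AvD(4)[OF assms(1)] unfolding occurs_at_def order_4213_def x_def y_def by auto
    then show False using Av_not_occurs_at[OF assms(1)] by (simp add: forbidden_def)
  qed
  then show ?thesis
    using Av_ascent_after_larger_entry[OF assms(1)] y assms(3,4,6) unfolding x_def y_def by simp
qed

text \<open>If the two entries following \<open>n - 1\<close> formed a descent, they would form 3214 with
  \<open>n - 1\<close> and \<open>n\<close>.\<close>

lemma Av_ascent_after_second_max:
  assumes "w \<in> Av n" "P < n" "Q < n" "w ! P = n" "w ! Q = n - 1" "Suc (Suc (Suc Q)) \<le> P"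
  shows "w ! Suc (Suc Q) = Suc (w ! Suc Q)"
proof -
  define x where "x = w ! Suc Q"
  define y where "y = w ! Suc (Suc Q)"
  have inj: "w ! i = w ! j \<longleftrightarrow> i = j" if "i < n" "j < n" for i j
    using Av_nth_inject[OF assms(1) that] .
  have "x \<noteq> n" "x \<noteq> n - 1" "x \<in> {1..n}"
    using inj[of "Suc Q" P] inj[of "Suc Q" Q] Av_nth_in_interval[OF assms(1), of "Suc Q"] assms
    unfolding x_def by simp_all
  then have x: "x < n - 1" by auto
  have "y \<noteq> n" "y \<noteq> n - 1" "y \<noteq> x" "y \<in> {1..n}"
    using inj[of "Suc (Suc Q)" P] inj[of "Suc (Suc Q)" Q] inj[of "Suc (Suc Q)" "Suc Q"]
      Av_nth_in_interval[OF assms(1), of "Suc (Suc Q)"] assms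
    unfolding x_def y_def by simp_all
  then have y: "y < n - 1" "y \<noteq> x" by auto
  have "x < y"
  proof (rule ccontr)
    assume "\<not> x < y"
    then have "occurs_at order_3214 w Q (Suc Q) (Suc (Suc Q)) P"
      using y x assms(2,4,5,6) AvD(4)[OF assms(1)] unfolding occurs_at_def order_3214_def x_def y_def by auto
    then show False using Av_not_occurs_at[OF assms(1)] by (simp add: forbidden_def)
  qed
  then show ?thesis
    using Av_ascent_after_larger_entry[OF assms(1)] y assms(2,5,6) unfolding x_def y_def by simp
qed

lemma card_eq_by_inverses:
  assumes "\<And>x. x \<in> A \<Longrightarrow> f x \<in> B \<and> g (f x) = x" and "\<And>y. y \<in> B \<Longrightarrow> g y \<in> A \<and> f (g y) = y"
  shows "card A = card B"
proof (rule bij_betw_same_card[of f], rule bij_betw_byWitness[where f' = g])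
  show "\<forall>x\<in>A. g (f x) = x" "\<forall>y\<in>B. f (g y) = y" using assms by simp_all
  show "f ` A \<subseteq> B" "g ` B \<subseteq> A" using assms by auto
qed

lemma card_eq_by_split_entry:
  assumes "A \<subseteq> Av (Suc m)" "B \<subseteq> Av m"
    and "\<And>w. w \<in> A \<Longrightarrow> Suc (k w) < Suc m \<and> w ! Suc (k w) = Suc (w ! k w) \<and>
           delete_entry w (k w) \<in> B \<and> k' (delete_entry w (k w)) = k w"
    and "\<And>u. u \<in> B \<Longrightarrow> k' u < m \<and> split_entry u (k' u) \<in> A \<and> k (split_entry u (k' u)) = k' u"
  shows "card A = card B"
proof (rule card_eq_by_inverses[where f = "\<lambda>w. delete_entry w (k w)" and g = "\<lambda>u. split_entry u (k' u)"])
  fix w assume w: "w \<in> A"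
  then have "distinct w" "length w = Suc m" using assms(1) AvD by blast+
  then show "delete_entry w (k w) \<in> B \<and> split_entry (delete_entry w (k w)) (k' (delete_entry w (k w))) = w"
    using assms(3)[OF w] split_entry_delete_entry by simp
next
  fix u assume u: "u \<in> B"
  then have "distinct u" "length u = m" using assms(2) AvD by blast+
  then show "split_entry u (k' u) \<in> A \<and> delete_entry (split_entry u (k' u)) (k (split_entry u (k' u))) = u"
    using assms(4)[OF u] delete_entry_split_entry by simp
qed

definition Av_at :: "nat \<Rightarrow> (nat \<Rightarrow> nat \<Rightarrow> bool) \<Rightarrow> nat list set"
  where "Av_at n r = {w \<in> Av n. r (pos n w) (pos (n - 1) w)}"

lemma card_Av_at_disjoint_Un:
  assumes "\<And>P Q. r P Q \<longleftrightarrow> r1 P Q \<or> r2 P Q" "\<And>P Q. \<not> (r1 P Q \<and> r2 P Q)"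
  shows "card (Av_at n r) = card (Av_at n r1) + card (Av_at n r2)"
proof -
  have "Av_at n r = Av_at n r1 \<union> Av_at n r2"
    unfolding Av_at_def using assms(1) by blast
  moreover have "Av_at n r1 \<inter> Av_at n r2 = {}"
    unfolding Av_at_def using assms(2) by blast
  moreover have "finite (Av_at n r1)" "finite (Av_at n r2)"
    using finite_Av unfolding Av_at_def by simp_all
  ultimately show ?thesis by (simp add: card_Un_disjoint)
qed

lemma Av_at_pos_neq:
  assumes "2 \<le> n"
  shows "Av_at n (\<lambda>P Q. P \<noteq> Q) = Av n"
proof -
  have "pos n w \<noteq> pos (n - 1) w" if "w \<in> Av n" for w
  proof
    assume "pos n w = pos (n - 1) w"
    moreover have "w ! pos n w = n" "w ! pos (n - 1) w = n - 1"
      using Av_pos(2)[OF that] assms by simp_all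
    ultimately show False using assms by simp
  qed
  then show ?thesis unfolding Av_at_def by blast
qed

lemma Av_at_eq_empty:
  assumes "2 \<le> n" "\<And>P Q. P < n \<Longrightarrow> Q < n \<Longrightarrow> \<not> r P Q"
  shows "Av_at n r = {}"
proof -
  have "\<not> r (pos n w) (pos (n - 1) w)" if "w \<in> Av n" for w
    using Av_pos(1)[OF that, of n] Av_pos(1)[OF that, of "n - 1"] assms by simp
  then show ?thesis unfolding Av_at_def by blast
qed

lemma Av_remove_max:
  assumes "w \<in> Av (Suc m)"
  shows "remove_nth w (pos (Suc m) w) \<in> Av m"
proof (rule AvI)
  have p: "pos (Suc m) w < Suc m" "w ! pos (Suc m) w = Suc m"
    using Av_pos[OF assms] by simp_all
  show "distinct (remove_nth w (pos (Suc m) w))"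
    using AvD(1)[OF assms] by (rule distinct_remove_nth)
  have "set (remove_nth w (pos (Suc m) w)) = {1..Suc m} - {Suc m}"
    using set_remove_nth[of w "pos (Suc m) w"] AvD[OF assms] p by simp
  also have "\<dots> = {1..m}"
    by auto
  finally show "set (remove_nth w (pos (Suc m) w)) = {1..m}" .
  show "avoids_forbidden (remove_nth w (pos (Suc m) w))"
    using avoids_forbidden_remove_nth[OF _ AvD(3)[OF assms]] p(1) AvD(4)[OF assms] by simp
qed

lemma Av_insert_max:
  assumes "v \<in> Av m" "i \<le> m" "avoids_forbidden (insert_nth v i (Suc m))"
  shows "insert_nth v i (Suc m) \<in> Av (Suc m)" "pos (Suc m) (insert_nth v i (Suc m)) = i"
proof -
  have "distinct (insert_nth v i (Suc m))"
    using AvD(1,2)[OF assms(1)] by (simp add: distinct_insert_nth)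
  moreover have "set (insert_nth v i (Suc m)) = {1..Suc m}"
    using AvD(2)[OF assms(1)] by (simp add: set_insert_nth atLeastAtMostSuc_conv)
  ultimately show w: "insert_nth v i (Suc m) \<in> Av (Suc m)"
    using assms(3) by (rule AvI)
  show "pos (Suc m) (insert_nth v i (Suc m)) = i"
    using Av_pos_eqI[OF w] AvD(4)[OF assms(1)] assms(2) by (simp add: nth_insert_nth)
qed

lemma card_Av_at_max_directly_before_pred:
  assumes "2 \<le> n"
  shows "card (Av_at n (\<lambda>P Q. Q = Suc P)) = card (Av (n - 1))"
proof -
  obtain m where n: "n = Suc m" and m: "1 \<le> m" using assms by (cases n) auto
  have "card (Av_at (Suc m) (\<lambda>P Q. Q = Suc P)) = card (Av m)"
  proof (rule card_eq_by_inverses[where f = "\<lambda>w. remove_nth w (pos (Suc m) w)"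
        and g = "\<lambda>u. insert_nth u (pos m u) (Suc m)"], goal_cases)
    case (1 w)
    then have wA: "w \<in> Av (Suc m)" and Q: "pos m w = Suc (pos (Suc m) w)"
      by (simp_all add: Av_at_def)
    define P where "P = pos (Suc m) w"
    have P: "P < Suc m" "w ! P = Suc m" using Av_pos[OF wA] P_def by simp_all
    have Q': "Suc P < Suc m" "w ! Suc P = m" using Av_pos[OF wA, of m] m Q P_def by simp_all
    have uA: "remove_nth w P \<in> Av m" using Av_remove_max[OF wA] P_def by simp
    have "remove_nth w P ! P = m" using P Q' AvD(4)[OF wA] by (simp add: nth_remove_nth)
    then have "pos m (remove_nth w P) = P" using Av_pos_eqI[OF uA] Q' by simp
    then show ?case
      using uA insert_nth_remove_nth[of P w] P AvD(4)[OF wA] P_def by simp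
  next
    case (2 u)
    then have uA: "u \<in> Av m" .
    define p where "p = pos m u"
    have p: "p < m" "u ! p = m" using Av_pos[OF uA, of m] m p_def by simp_all
    have "avoids_forbidden (insert_nth u p (Suc m))"
      using avoids_forbidden_insert_before_max[of u p "Suc m"] AvD[OF uA] p by simp
    then have w: "insert_nth u p (Suc m) \<in> Av (Suc m)" "pos (Suc m) (insert_nth u p (Suc m)) = p"
      using Av_insert_max[OF uA] p by simp_all
    moreover have "pos m (insert_nth u p (Suc m)) = Suc p"
      using Av_pos_eqI[OF w(1)] p AvD(4)[OF uA] by (simp add: nth_insert_nth)
    ultimately show ?case
      using p AvD(4)[OF uA] p_def by (simp add: Av_at_def)
  qed
  then show ?thesis using n by simp
qed

lemma card_Av_at_max_directly_after_pred:
  assumes "2 \<le> n"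
  shows "card (Av_at n (\<lambda>P Q. P = Suc Q)) = card (Av (n - 1))"
proof -
  obtain m where n: "n = Suc m" and m: "1 \<le> m" using assms by (cases n) auto
  have "card (Av_at (Suc m) (\<lambda>P Q. P = Suc Q)) = card (Av m)"
  proof (rule card_eq_by_split_entry[where k = "pos m" and k' = "pos m"])
    fix w assume "w \<in> Av_at (Suc m) (\<lambda>P Q. P = Suc Q)"
    then have wA: "w \<in> Av (Suc m)" and P: "pos (Suc m) w = Suc (pos m w)"
      by (simp_all add: Av_at_def)
    define Q where "Q = pos m w"
    have Q: "Q < Suc m" "w ! Q = m" using Av_pos[OF wA, of m] m Q_def by simp_all
    have P': "Suc Q < Suc m" "w ! Suc Q = Suc m" using Av_pos[OF wA, of "Suc m"] P Q_def by simp_all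
    have uA: "delete_entry w Q \<in> Av m" using Av_delete_entry[OF wA Q(1)] by simp
    have "delete_entry w Q ! Q = m"
      using P' Q AvD(4)[OF wA] by (simp add: nth_delete_entry shift_down_def)
    then have "pos m (delete_entry w Q) = Q" using Av_pos_eqI[OF uA] P' by simp
    then show "Suc (pos m w) < Suc m \<and> w ! Suc (pos m w) = Suc (w ! pos m w) \<and>
        delete_entry w (pos m w) \<in> Av m \<and> pos m (delete_entry w (pos m w)) = pos m w"
      using P' Q uA Q_def by simp
  next
    fix u assume uA: "u \<in> Av m"
    define p where "p = pos m u"
    have p: "p < m" "u ! p = m" using Av_pos[OF uA, of m] m p_def by simp_all
    have wA: "split_entry u p \<in> Av (Suc m)" using Av_split_entry[OF uA p(1)] .
    have "split_entry u p ! p = m" "split_entry u p ! Suc p = Suc m"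
      using p AvD(4)[OF uA] by (simp_all add: nth_split_entry shift_up_def)
    then have "pos m (split_entry u p) = p" "pos (Suc m) (split_entry u p) = Suc p"
      using Av_pos_eqI[OF wA] p by simp_all
    then show "pos m u < m \<and> split_entry u (pos m u) \<in> Av_at (Suc m) (\<lambda>P Q. P = Suc Q) \<and>
        pos m (split_entry u (pos m u)) = pos m u"
      using wA p p_def by (simp add: Av_at_def)
  qed (auto simp: Av_at_def)
  then show ?thesis using n by simp
qed

lemma delete_entry_after_max:
  assumes "w \<in> Av_at (Suc m) (\<lambda>P Q. Suc (Suc P) \<le> Q)" "2 \<le> m"
  defines "P \<equiv> pos (Suc m) w"
  shows "Suc (Suc P) < Suc m" "w ! Suc (Suc P) = Suc (w ! Suc P)"
    "delete_entry w (Suc P) \<in> Av_at m (\<lambda>P Q. P < Q)" "pos m (delete_entry w (Suc P)) = P"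
proof -
  have wA: "w \<in> Av (Suc m)" and PQ: "Suc (Suc P) \<le> pos m w"
    using assms(1) unfolding P_def by (simp_all add: Av_at_def)
  define Q where "Q = pos m w"
  have P: "P < Suc m" "w ! P = Suc m" using Av_pos[OF wA, of "Suc m"] P_def by simp_all
  have Q: "Q < Suc m" "w ! Q = m" using Av_pos[OF wA, of m] assms(2) Q_def by simp_all
  have PQ': "Suc (Suc P) \<le> Q" using PQ Q_def by simp
  then show "Suc (Suc P) < Suc m" using Q by simp
  show "w ! Suc (Suc P) = Suc (w ! Suc P)"
    using Av_ascent_after_max[OF wA P(1) Q(1)] P Q PQ' by simp
  have "w ! Suc P \<noteq> Suc m" "w ! Suc P \<noteq> m" "w ! Suc P \<in> {1..Suc m}"
    using Av_nth_inject[OF wA, of "Suc P" P] Av_nth_inject[OF wA, of "Suc P" Q]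
      Av_nth_in_interval[OF wA, of "Suc P"] P Q PQ' by simp_all
  then have x: "w ! Suc P < m" by auto
  define u where "u = delete_entry w (Suc P)"
  have uA: "u \<in> Av m" using Av_delete_entry[OF wA, of "Suc P"] PQ' Q u_def by simp
  have "u ! P = m"
    using nth_delete_entry_above[OF wA, of "Suc P" P] x P Q PQ' u_def by simp
  then show pos_u: "pos m (delete_entry w (Suc P)) = P"
    using Av_pos_eqI[OF uA] PQ' Q u_def by simp
  have "u ! (Q - 1) = m - 1"
    using nth_delete_entry_above[OF wA, of "Suc P" Q] x Q PQ' u_def by simp
  then have "pos (m - 1) u = Q - 1" using Av_pos_eqI[OF uA] PQ' Q by simp
  then show "delete_entry w (Suc P) \<in> Av_at m (\<lambda>P Q. P < Q)"
    using uA pos_u PQ' u_def by (simp add: Av_at_def)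
qed

lemma split_entry_after_max:
  assumes "u \<in> Av_at m (\<lambda>P Q. P < Q)" "2 \<le> m"
  defines "p \<equiv> pos m u"
  shows "Suc p < m" "split_entry u (Suc p) \<in> Av_at (Suc m) (\<lambda>P Q. Suc (Suc P) \<le> Q)"
    "pos (Suc m) (split_entry u (Suc p)) = p"
proof -
  have uA: "u \<in> Av m" and pq: "p < pos (m - 1) u"
    using assms(1) unfolding p_def by (simp_all add: Av_at_def)
  define q where "q = pos (m - 1) u"
  have p: "p < m" "u ! p = m" using Av_pos[OF uA, of m] assms(2) p_def by simp_all
  have q: "q < m" "u ! q = m - 1" using Av_pos[OF uA, of "m - 1"] assms(2) q_def by simp_all
  have pq': "p < q" using pq q_def by simp
  then show "Suc p < m" using q by simp
  have "u ! Suc p \<noteq> m" "u ! Suc p \<in> {1..m}"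
    using Av_nth_inject[OF uA, of "Suc p" p] Av_nth_in_interval[OF uA, of "Suc p"] p q pq'
    by simp_all
  then have y: "u ! Suc p < m" by auto
  define w where "w = split_entry u (Suc p)"
  have wA: "w \<in> Av (Suc m)" using Av_split_entry[OF uA, of "Suc p"] pq' q w_def by simp
  have "w ! p = Suc m"
    using nth_split_entry_above[of "Suc p" u p] y p q pq' AvD(4)[OF uA] w_def by simp
  then show pos_w: "pos (Suc m) (split_entry u (Suc p)) = p"
    using Av_pos_eqI[OF wA] p w_def by simp
  obtain Q where Q: "Suc (Suc p) \<le> Q" "Q < Suc m" "w ! Q = m"
  proof (cases "q = Suc p")
    case True
    then have "w ! Suc (Suc p) = m"
      using q assms(2) AvD(4)[OF uA] by (simp add: w_def nth_split_entry)
    then show ?thesis using that[of "Suc (Suc p)"] True q by simp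
  next
    case False
    then have "u ! Suc p < u ! q"
      using y q pq' Av_nth_inject[OF uA, of "Suc p" q] by simp
    then have "w ! Suc q = m"
      using nth_split_entry_above[of "Suc p" u q] q assms(2) pq' AvD(4)[OF uA] w_def by simp
    then show ?thesis using that[of "Suc q"] False q pq' by simp
  qed
  then have "pos m w = Q" using Av_pos_eqI[OF wA] by simp
  then show "split_entry u (Suc p) \<in> Av_at (Suc m) (\<lambda>P Q. Suc (Suc P) \<le> Q)"
    using wA pos_w Q w_def by (simp add: Av_at_def)
qed

lemma card_Av_at_max_far_before_pred:
  assumes "3 \<le> n"
  shows "card (Av_at n (\<lambda>P Q. Suc (Suc P) \<le> Q)) = card (Av_at (n - 1) (\<lambda>P Q. P < Q))"
proof -
  obtain m where n: "n = Suc m" and m: "2 \<le> m" using assms by (cases n) auto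
  have "card (Av_at (Suc m) (\<lambda>P Q. Suc (Suc P) \<le> Q)) = card (Av_at m (\<lambda>P Q. P < Q))"
    by (rule card_eq_by_split_entry[where k = "\<lambda>w. Suc (pos (Suc m) w)" and k' = "\<lambda>u. Suc (pos m u)"])
      (use delete_entry_after_max[OF _ m] split_entry_after_max[OF _ m] in \<open>auto simp: Av_at_def\<close>)
  then show ?thesis using n by simp
qed

lemma delete_entry_after_second_max:
  assumes "w \<in> Av_at (Suc m) (\<lambda>P Q. Suc (Suc (Suc Q)) \<le> P)" "2 \<le> m"
  defines "Q \<equiv> pos m w"
  shows "Suc (Suc Q) < Suc m" "w ! Suc (Suc Q) = Suc (w ! Suc Q)"
    "delete_entry w (Suc Q) \<in> Av_at m (\<lambda>P Q. Suc (Suc Q) \<le> P)"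
    "pos (m - 1) (delete_entry w (Suc Q)) = Q"
proof -
  have wA: "w \<in> Av (Suc m)" and PQ: "Suc (Suc (Suc Q)) \<le> pos (Suc m) w"
    using assms(1) unfolding Q_def by (simp_all add: Av_at_def)
  define P where "P = pos (Suc m) w"
  have P: "P < Suc m" "w ! P = Suc m" using Av_pos[OF wA, of "Suc m"] P_def by simp_all
  have Q: "Q < Suc m" "w ! Q = m" using Av_pos[OF wA, of m] assms(2) Q_def by simp_all
  have PQ': "Suc (Suc (Suc Q)) \<le> P" using PQ P_def by simp
  then show "Suc (Suc Q) < Suc m" using P by simp
  show "w ! Suc (Suc Q) = Suc (w ! Suc Q)"
    using Av_ascent_after_second_max[OF wA P(1) Q(1)] P Q PQ' by simp
  have "w ! Suc Q \<noteq> Suc m" "w ! Suc Q \<noteq> m" "w ! Suc Q \<in> {1..Suc m}"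
    using Av_nth_inject[OF wA, of "Suc Q" P] Av_nth_inject[OF wA, of "Suc Q" Q]
      Av_nth_in_interval[OF wA, of "Suc Q"] P Q PQ' by simp_all
  then have x: "w ! Suc Q < m" by auto
  define u where "u = delete_entry w (Suc Q)"
  have uA: "u \<in> Av m" using Av_delete_entry[OF wA, of "Suc Q"] PQ' P u_def by simp
  have "u ! Q = m - 1"
    using nth_delete_entry_above[OF wA, of "Suc Q" Q] x P Q PQ' u_def by simp
  then show pos_u: "pos (m - 1) (delete_entry w (Suc Q)) = Q"
    using Av_pos_eqI[OF uA] PQ' P u_def by simp
  have "u ! (P - 1) = m"
    using nth_delete_entry_above[OF wA, of "Suc Q" P] x P Q PQ' u_def by simp
  then have "pos m u = P - 1" using Av_pos_eqI[OF uA] PQ' P by simp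
  then show "delete_entry w (Suc Q) \<in> Av_at m (\<lambda>P Q. Suc (Suc Q) \<le> P)"
    using uA pos_u PQ' u_def by (simp add: Av_at_def)
qed

lemma split_entry_after_second_max:
  assumes "u \<in> Av_at m (\<lambda>P Q. Suc (Suc Q) \<le> P)" "2 \<le> m"
  defines "q \<equiv> pos (m - 1) u"
  shows "Suc q < m" "split_entry u (Suc q) \<in> Av_at (Suc m) (\<lambda>P Q. Suc (Suc (Suc Q)) \<le> P)"
    "pos m (split_entry u (Suc q)) = q"
proof -
  have uA: "u \<in> Av m" and pq: "Suc (Suc q) \<le> pos m u"
    using assms(1) unfolding q_def by (simp_all add: Av_at_def)
  define p where "p = pos m u"
  have p: "p < m" "u ! p = m" using Av_pos[OF uA, of m] assms(2) p_def by simp_all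
  have q: "q < m" "u ! q = m - 1" using Av_pos[OF uA, of "m - 1"] assms(2) q_def by simp_all
  have pq': "Suc (Suc q) \<le> p" using pq p_def by simp
  then show "Suc q < m" using p by simp
  have "u ! Suc q \<noteq> m" "u ! Suc q \<noteq> m - 1" "u ! Suc q \<in> {1..m}"
    using Av_nth_inject[OF uA, of "Suc q" p] Av_nth_inject[OF uA, of "Suc q" q]
      Av_nth_in_interval[OF uA, of "Suc q"] p q pq'
    by simp_all
  then have y: "u ! Suc q < m - 1" by auto
  define w where "w = split_entry u (Suc q)"
  have wA: "w \<in> Av (Suc m)" using Av_split_entry[OF uA, of "Suc q"] pq' p w_def by simp
  have "w ! q = m"
    using nth_split_entry_above[of "Suc q" u q] y p q pq' assms(2) AvD(4)[OF uA] w_def by simp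
  then show pos_w: "pos m (split_entry u (Suc q)) = q"
    using Av_pos_eqI[OF wA] q w_def by simp
  have "w ! Suc p = Suc m"
    using nth_split_entry_above[of "Suc q" u p] y p q pq' AvD(4)[OF uA] w_def by simp
  then have "pos (Suc m) w = Suc p" using Av_pos_eqI[OF wA] p by simp
  then show "split_entry u (Suc q) \<in> Av_at (Suc m) (\<lambda>P Q. Suc (Suc (Suc Q)) \<le> P)"
    using wA pos_w pq' w_def by (simp add: Av_at_def)
qed

lemma card_Av_at_max_far_after_pred:
  assumes "3 \<le> n"
  shows "card (Av_at n (\<lambda>P Q. Suc (Suc (Suc Q)) \<le> P)) =
    card (Av_at (n - 1) (\<lambda>P Q. Suc (Suc Q) \<le> P))"
proof -
  obtain m where n: "n = Suc m" and m: "2 \<le> m" using assms by (cases n) auto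
  have "card (Av_at (Suc m) (\<lambda>P Q. Suc (Suc (Suc Q)) \<le> P)) = card (Av_at m (\<lambda>P Q. Suc (Suc Q) \<le> P))"
    by (rule card_eq_by_split_entry[where k = "\<lambda>w. Suc (pos m w)" and k' = "\<lambda>u. Suc (pos (m - 1) u)"])
      (use delete_entry_after_second_max[OF _ m] split_entry_after_second_max[OF _ m]
        in \<open>auto simp: Av_at_def\<close>)
  then show ?thesis using n by simp
qed

section \<open>Insertion sites of a new maximum\<close>

definition sites :: "nat \<Rightarrow> (nat list \<times> nat) set"
  where "sites m = {(v, i). v \<in> Av m \<and> i \<le> m \<and> avoids_forbidden (insert_nth v i (Suc m))}"

definition last_sites :: "nat \<Rightarrow> (nat list \<times> nat) set"
  where "last_sites m = {(v, i) \<in> sites m. (v, Suc i) \<notin> sites m}"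

definition inner_sites :: "nat \<Rightarrow> (nat list \<times> nat) set"
  where "inner_sites m = {(v, i) \<in> sites m. (v, Suc i) \<in> sites m}"

lemma finite_sites: "finite (sites m)"
proof (rule finite_subset)
  show "sites m \<subseteq> Av m \<times> {0..m}" unfolding sites_def by auto
  show "finite (Av m \<times> {0..m})" using finite_Av by simp
qed

lemma card_sites: "card (sites m) = card (Av (Suc m))"
proof (rule card_eq_by_inverses[where f = "\<lambda>(v, i). insert_nth v i (Suc m)"
      and g = "\<lambda>w. (remove_nth w (pos (Suc m) w), pos (Suc m) w)"], goal_cases)
  case (1 s)
  then obtain v i where s: "s = (v, i)" and vA: "v \<in> Av m" and "i \<le> m"
    and "avoids_forbidden (insert_nth v i (Suc m))"
    unfolding sites_def by blast
  then have "insert_nth v i (Suc m) \<in> Av (Suc m)" "pos (Suc m) (insert_nth v i (Suc m)) = i"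
    using Av_insert_max by blast+
  then show ?case using s \<open>i \<le> m\<close> AvD(4)[OF vA] by simp
next
  case (2 w)
  then have wA: "w \<in> Av (Suc m)" .
  define i where "i = pos (Suc m) w"
  have i: "i < Suc m" "w ! i = Suc m" using Av_pos[OF wA] i_def by simp_all
  have w: "insert_nth (remove_nth w i) i (Suc m) = w"
    using insert_nth_remove_nth[of i w] i AvD(4)[OF wA] by simp
  then have "(remove_nth w i, i) \<in> sites m"
    using Av_remove_max[OF wA] i AvD(3)[OF wA] unfolding sites_def i_def by simp
  then show ?case using w unfolding i_def by simp
qed

lemma card_sites_eq: "card (sites m) = card (inner_sites m) + card (last_sites m)"
proof -
  have "sites m = inner_sites m \<union> last_sites m" "inner_sites m \<inter> last_sites m = {}"
    unfolding inner_sites_def last_sites_def by auto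
  moreover have "inner_sites m \<subseteq> sites m" "last_sites m \<subseteq> sites m"
    unfolding inner_sites_def last_sites_def by auto
  then have "finite (inner_sites m)" "finite (last_sites m)"
    using finite_subset finite_sites by blast+
  ultimately show ?thesis by (simp add: card_Un_disjoint)
qed

lemma sites_nonempty:
  assumes "v \<in> Av m"
  shows "\<exists>i. (v, i) \<in> sites m"
proof (cases m)
  case 0
  then have "v = []" using AvD(4)[OF assms] by simp
  then have "(v, 0) \<in> sites m"
    unfolding sites_def using assms 0 avoids_forbidden_short by (simp add: insert_nth_def)
  then show ?thesis ..
next
  case (Suc m')
  define p where "p = pos m v"
  have p: "p < m" "v ! p = m" using Av_pos[OF assms, of m] Suc p_def by simp_all
  have "map (shift_up (v ! p)) v = v"
    using AvD(2)[OF assms] p by (intro map_idI) (auto simp: shift_up_def)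
  then have "split_entry v p = insert_nth v (Suc p) (Suc m)"
    unfolding split_entry_def using p by simp
  then have "(v, Suc p) \<in> sites m"
    using avoids_forbidden_split_entry[of v p] AvD[OF assms] assms p unfolding sites_def by simp
  then show ?thesis ..
qed

text \<open>By convexity, the sites of an avoider form an interval, so it has only one last site.\<close>

lemma last_sites_ge:
  assumes "(v, i) \<in> last_sites m" "(v, j) \<in> sites m"
  shows "j \<le> i"
proof (rule ccontr)
  assume "\<not> j \<le> i"
  have vA: "v \<in> Av m" and ai: "avoids_forbidden (insert_nth v i (Suc m))"
    and next_i: "(v, Suc i) \<notin> sites m" and j: "j \<le> m"
    and aj: "avoids_forbidden (insert_nth v j (Suc m))"
    using assms unfolding last_sites_def sites_def by auto
  have "Suc i \<noteq> j" using assms(2) next_i by auto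
  with \<open>\<not> j \<le> i\<close> have "Suc i < j" by simp
  then have "avoids_forbidden (insert_nth v (Suc i) (Suc m))"
    using avoids_forbidden_insert_max_between[of v "Suc m" i "Suc i" j] AvD[OF vA] ai aj j
    by auto
  then have "(v, Suc i) \<in> sites m"
    unfolding sites_def using vA \<open>Suc i < j\<close> j by auto
  with next_i show False by simp
qed

lemma card_last_sites: "card (last_sites m) = card (Av m)"
proof -
  have "inj_on fst (last_sites m)"
  proof (rule inj_onI)
    fix s t assume st: "s \<in> last_sites m" "t \<in> last_sites m" "fst s = fst t"
    obtain v i where s: "s = (v, i)" by (cases s)
    obtain j where t: "t = (v, j)" using st(3) s by (cases t) simp
    have "(v, i) \<in> sites m" "(v, j) \<in> sites m"
      using st s t unfolding last_sites_def by auto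
    then show "s = t"
      using last_sites_ge[of v i m j] last_sites_ge[of v j m i] st s t by simp
  qed
  moreover have "fst ` last_sites m = Av m"
  proof
    show "fst ` last_sites m \<subseteq> Av m" unfolding last_sites_def sites_def by auto
    show "Av m \<subseteq> fst ` last_sites m"
    proof
      fix v assume vA: "v \<in> Av m"
      define G where "G = {i. (v, i) \<in> sites m}"
      have fin: "finite G" unfolding G_def sites_def by (rule finite_subset[of _ "{0..m}"]) auto
      moreover have "G \<noteq> {}" using sites_nonempty[OF vA] unfolding G_def by blast
      ultimately have "Max G \<in> G" by (rule Max_in)
      moreover have "Suc (Max G) \<notin> G" using Max_ge[OF fin, of "Suc (Max G)"] by auto
      ultimately have "(v, Max G) \<in> last_sites m" unfolding G_def last_sites_def by simp
      then show "v \<in> fst ` last_sites m" by force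
    qed
  qed
  ultimately show ?thesis by (metis card_image)
qed

lemma wrap_inner_site:
  assumes "(v, i) \<in> inner_sites m"
  shows "wrap v i (Suc m) (Suc (Suc m)) \<in> Av_at (Suc (Suc m)) (\<lambda>P Q. P = Suc (Suc Q))"
    "pos (Suc m) (wrap v i (Suc m) (Suc (Suc m))) = i"
    "remove_nth (remove_nth (wrap v i (Suc m) (Suc (Suc m))) (Suc (Suc i))) i = v"
proof -
  have vA: "v \<in> Av m" and i: "Suc i \<le> m"
    and a1: "avoids_forbidden (insert_nth v i (Suc m))"
    and a2: "avoids_forbidden (insert_nth v (Suc i) (Suc m))"
    using assms unfolding inner_sites_def sites_def by auto
  define w where "w = wrap v i (Suc m) (Suc (Suc m))"
  have len: "i < length v" using i AvD(4)[OF vA] by simp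
  have "distinct w" "set w = {1..Suc (Suc m)}"
    using AvD(1,2)[OF vA] unfolding w_def wrap_def
    by (auto simp: distinct_insert_nth set_insert_nth)
  moreover have "avoids_forbidden w"
    unfolding w_def using avoids_forbidden_wrap[OF AvD(1)[OF vA] len _ _ a1 a2] AvD(2)[OF vA]
    by simp
  ultimately have wA: "w \<in> Av (Suc (Suc m))" by (rule AvI)
  have "pos (Suc m) w = i" "pos (Suc (Suc m)) w = Suc (Suc i)"
    using Av_pos_eqI[OF wA] len i AvD(4)[OF vA] by (simp_all add: w_def nth_wrap)
  then show "w \<in> Av_at (Suc (Suc m)) (\<lambda>P Q. P = Suc (Suc Q))" "pos (Suc m) w = i"
    using wA by (simp_all add: Av_at_def)
  show "remove_nth (remove_nth w (Suc (Suc i))) i = v"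
    using len by (simp add: w_def remove_nth_wrap_right)
qed

lemma unwrap_Av_at:
  assumes "w \<in> Av_at (Suc (Suc m)) (\<lambda>P Q. P = Suc (Suc Q))"
  defines "Q \<equiv> pos (Suc m) w"
  defines "v \<equiv> remove_nth (remove_nth w (Suc (Suc Q))) Q"
  shows "(v, Q) \<in> inner_sites m" "wrap v Q (Suc m) (Suc (Suc m)) = w"
proof -
  have wA: "w \<in> Av (Suc (Suc m))" and PQ: "pos (Suc (Suc m)) w = Suc (Suc Q)"
    using assms(1) unfolding Q_def by (simp_all add: Av_at_def)
  have Q: "Q < Suc (Suc m)" "w ! Q = Suc m" using Av_pos[OF wA, of "Suc m"] Q_def by simp_all
  have P: "Suc (Suc Q) < Suc (Suc m)" using Av_pos(1)[OF wA, of "Suc (Suc m)"] PQ by simp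
  define w1 where "w1 = remove_nth w (Suc (Suc Q))"
  have w1A: "w1 \<in> Av (Suc m)" using Av_remove_max[OF wA] PQ w1_def by simp
  have "w1 ! Q = Suc m" using Q P AvD(4)[OF wA] by (simp add: w1_def nth_remove_nth)
  then have "pos (Suc m) w1 = Q" using Av_pos_eqI[OF w1A] P by simp
  then have vA: "v \<in> Av m" using Av_remove_max[OF w1A] v_def w1_def by simp
  have Qv: "Q < length v" using AvD(4)[OF vA] P by simp
  have w1: "insert_nth v Q (Suc m) = w1"
    using insert_nth_remove_nth[of Q w1] \<open>w1 ! Q = Suc m\<close> AvD(4)[OF w1A] P v_def w1_def by simp
  have "wrap v Q (Suc m) (Suc (Suc m)) = insert_nth w1 (Suc (Suc Q)) (Suc (Suc m))"
    unfolding wrap_def w1 ..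
  also have "\<dots> = w"
    using insert_nth_remove_nth[of "Suc (Suc Q)" w] Av_pos(2)[OF wA, of "Suc (Suc m)"] PQ P
      AvD(4)[OF wA] unfolding w1_def by simp
  finally show w: "wrap v Q (Suc m) (Suc (Suc m)) = w" .
  have "remove_nth w Q = insert_nth v (Suc Q) (Suc (Suc m))"
    using remove_nth_wrap_left[OF Qv] w by metis
  moreover have "avoids_forbidden (remove_nth w Q)"
    using avoids_forbidden_remove_nth[OF _ AvD(3)[OF wA]] Q(1) AvD(4)[OF wA] by simp
  ultimately have "avoids_forbidden (insert_nth v (Suc Q) (Suc (Suc m)))" by simp
  then have "avoids_forbidden (insert_nth v (Suc Q) (Suc m))"
    using avoids_forbidden_insert_nth_max_iff[of v "Suc m" "Suc (Suc m)" "Suc Q"] AvD(2)[OF vA] Qv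
    by auto
  then show "(v, Q) \<in> inner_sites m"
    using vA Qv AvD(3)[OF w1A] AvD(4)[OF vA] w1
    unfolding inner_sites_def sites_def by simp
qed

lemma card_inner_sites: "card (inner_sites m) = card (Av_at (Suc (Suc m)) (\<lambda>P Q. P = Suc (Suc Q)))"
proof (rule card_eq_by_inverses[where f = "\<lambda>(v, i). wrap v i (Suc m) (Suc (Suc m))"
      and g = "\<lambda>w. (remove_nth (remove_nth w (Suc (Suc (pos (Suc m) w)))) (pos (Suc m) w),
        pos (Suc m) w)"], goal_cases)
  case (1 s)
  then show ?case using wrap_inner_site[of "fst s" "snd s" m] by (cases s) simp
next
  case (2 w)
  then show ?case using unwrap_Av_at[of w m] by simp
qed

lemma card_Av_at_max_two_after_pred:
  assumes "2 \<le> n"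
  shows "card (Av (n - 1)) = card (Av_at n (\<lambda>P Q. P = Suc (Suc Q))) + card (Av (n - 2))"
proof -
  obtain m where "n = Suc (Suc m)" using assms by (metis add_2_eq_Suc le_Suc_ex)
  then show ?thesis
    using card_sites[of m] card_sites_eq[of m] card_inner_sites[of m] card_last_sites[of m] by simp
qed

section \<open>The recurrence\<close>

lemma card_Av_eq_sum:
  assumes "2 \<le> n"
  shows "card (Av n) =
    card (Av_at n (\<lambda>P Q. P < Q)) + card (Av (n - 1)) + card (Av_at n (\<lambda>P Q. Suc (Suc Q) \<le> P))"
proof -
  have "card (Av_at n (\<lambda>P Q. P \<noteq> Q)) =
      card (Av_at n (\<lambda>P Q. P < Q)) + card (Av_at n (\<lambda>P Q. Q < P))"
    by (rule card_Av_at_disjoint_Un) auto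
  then have "card (Av n) = card (Av_at n (\<lambda>P Q. P < Q)) + card (Av_at n (\<lambda>P Q. Q < P))"
    using Av_at_pos_neq[OF assms] by simp
  moreover have "card (Av_at n (\<lambda>P Q. Q < P)) =
      card (Av_at n (\<lambda>P Q. P = Suc Q)) + card (Av_at n (\<lambda>P Q. Suc (Suc Q) \<le> P))"
    by (rule card_Av_at_disjoint_Un) auto
  ultimately show ?thesis using card_Av_at_max_directly_after_pred[OF assms] by simp
qed

lemma card_Av_at_max_before_pred:
  assumes "3 \<le> n"
  shows "card (Av_at n (\<lambda>P Q. P < Q)) = card (Av (n - 1)) + card (Av_at (n - 1) (\<lambda>P Q. P < Q))"
proof -
  have "card (Av_at n (\<lambda>P Q. P < Q)) =
      card (Av_at n (\<lambda>P Q. Q = Suc P)) + card (Av_at n (\<lambda>P Q. Suc (Suc P) \<le> Q))"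
    by (rule card_Av_at_disjoint_Un) auto
  then show ?thesis
    using card_Av_at_max_directly_before_pred card_Av_at_max_far_before_pred assms by simp
qed

lemma card_Av_at_max_after_pred:
  assumes "3 \<le> n"
  shows "card (Av_at n (\<lambda>P Q. Suc (Suc Q) \<le> P)) + card (Av (n - 2)) =
    card (Av (n - 1)) + card (Av_at (n - 1) (\<lambda>P Q. Suc (Suc Q) \<le> P))"
proof -
  have "card (Av_at n (\<lambda>P Q. Suc (Suc Q) \<le> P)) =
      card (Av_at n (\<lambda>P Q. P = Suc (Suc Q))) + card (Av_at n (\<lambda>P Q. Suc (Suc (Suc Q)) \<le> P))"
    by (rule card_Av_at_disjoint_Un) auto
  then show ?thesis
    using card_Av_at_max_two_after_pred card_Av_at_max_far_after_pred assms by simp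
qed

lemma card_Av_recurrence:
  assumes "3 \<le> n"
  shows "int (card (Av n)) = 4 * int (card (Av (n - 1))) - 2 * int (card (Av (n - 2)))"
proof -
  have "n - 1 - 1 = n - 2" by simp
  then have "card (Av (n - 1)) = card (Av_at (n - 1) (\<lambda>P Q. P < Q)) + card (Av (n - 2)) +
      card (Av_at (n - 1) (\<lambda>P Q. Suc (Suc Q) \<le> P))"
    using card_Av_eq_sum[of "n - 1"] assms by simp
  then have "card (Av n) + 2 * card (Av (n - 2)) = 4 * card (Av (n - 1))"
    using card_Av_eq_sum[of n] card_Av_at_max_before_pred[OF assms]
      card_Av_at_max_after_pred[OF assms] assms
    by linarith
  then show ?thesis by linarith
qed

lemma Av_1: "Av 1 = {[1]}"
proof
  show "Av 1 \<subseteq> {[1]}"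
  proof
    fix w assume w: "w \<in> Av 1"
    then obtain x where "w = [x]" using AvD(4)[OF w] by (metis One_nat_def length_0_conv length_Suc_conv)
    then show "w \<in> {[1]}" using AvD(2)[OF w] by auto
  qed
  show "{[1]} \<subseteq> Av 1" unfolding Av_def using avoids_forbidden_short[of "[1]"] by auto
qed

lemma card_Av_2: "card (Av 2) = 2"
proof -
  have "card (Av_at 2 (\<lambda>P Q. P < Q)) =
      card (Av_at 2 (\<lambda>P Q. Q = Suc P)) + card (Av_at 2 (\<lambda>P Q. Suc (Suc P) \<le> Q))"
    by (rule card_Av_at_disjoint_Un) auto
  moreover have "Av_at 2 (\<lambda>P Q. Suc (Suc P) \<le> Q) = {}" "Av_at 2 (\<lambda>P Q. Suc (Suc Q) \<le> P) = {}"
    by (auto intro!: Av_at_eq_empty)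
  ultimately show ?thesis
    using card_Av_eq_sum[of 2] card_Av_at_max_directly_before_pred[of 2] Av_1 by simp
qed

section \<open>Avoiding lists versus avoiding permutations\<close>

lemma atLeastAtMost_1_4: "{1..4::nat} = {1, 2, 3, 4}"
  by auto

lemma nth_map_upt_1: "t < n \<Longrightarrow> map w [1..<Suc n] ! t = w (Suc t)"
  by (simp del: upt_Suc add: nth_upt)

lemma contains_pattern_4_iff_occurs:
  assumes R: "\<And>x1 x2 x3 x4. R x1 x2 x3 x4 \<longleftrightarrow>
    (\<forall>a\<in>{1, 2, 3, 4}. \<forall>b\<in>{1, 2, 3, 4}.
      [x1, x2, x3, x4] ! (a - 1) < [x1, x2, x3, x4] ! (b - 1) \<longleftrightarrow> p a < p b)"
  shows "contains_pattern n w 4 p \<longleftrightarrow> occurs R (map w [1..<Suc n])"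
proof
  assume "contains_pattern n w 4 p"
  then obtain idx where mono: "strict_mono_on {1..4} idx" and range: "idx ` {1..4} \<subseteq> {1..n}"
    and iso: "\<forall>a\<in>{1..4}. \<forall>b\<in>{1..4}. w (idx a) < w (idx b) \<longleftrightarrow> p a < p b"
    unfolding contains_pattern_def by blast
  have idx: "idx 1 < idx 2" "idx 2 < idx 3" "idx 3 < idx 4" "1 \<le> idx 1" "idx 4 \<le> n"
    using mono range unfolding strict_mono_on_def atLeastAtMost_1_4 by auto
  then have "map w [1..<Suc n] ! (idx k - 1) = w (idx k)" if "k \<in> {1, 2, 3, 4}" for k
    using that nth_map_upt_1[of "idx k - 1" n w] by auto
  then have vals: "map w [1..<Suc n] ! (idx 1 - 1) = w (idx 1)" "map w [1..<Suc n] ! (idx 2 - 1) = w (idx 2)"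
    "map w [1..<Suc n] ! (idx 3 - 1) = w (idx 3)" "map w [1..<Suc n] ! (idx 4 - 1) = w (idx 4)"
    by simp_all
  have "R (w (idx 1)) (w (idx 2)) (w (idx 3)) (w (idx 4))"
    using iso unfolding R atLeastAtMost_1_4 by simp
  moreover have "idx 1 - 1 < idx 2 - 1" "idx 2 - 1 < idx 3 - 1" "idx 3 - 1 < idx 4 - 1" "idx 4 - 1 < n"
    using idx by linarith+
  ultimately have "occurs_at R (map w [1..<Suc n]) (idx 1 - 1) (idx 2 - 1) (idx 3 - 1) (idx 4 - 1)"
    unfolding occurs_at_def vals by (simp del: upt_Suc)
  then show "occurs R (map w [1..<Suc n])" unfolding occurs_def by blast
next
  assume "occurs R (map w [1..<Suc n])"
  then obtain a b c d where occ: "occurs_at R (map w [1..<Suc n]) a b c d"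
    unfolding occurs_def by blast
  define idx where "idx k = Suc ([a, b, c, d] ! (k - 1))" for k :: nat
  have ord: "a < b" "b < c" "c < d" "d < n"
    using occ unfolding occurs_at_def by (simp_all del: upt_Suc)
  have "R (w (idx 1)) (w (idx 2)) (w (idx 3)) (w (idx 4))"
    using occ ord nth_map_upt_1[of _ n w] unfolding occurs_at_def idx_def by (simp del: upt_Suc)
  then have "\<forall>a\<in>{1..4}. \<forall>b\<in>{1..4}. w (idx a) < w (idx b) \<longleftrightarrow> p a < p b"
    unfolding R atLeastAtMost_1_4 by simp
  moreover have "strict_mono_on {1..4} idx" "idx ` {1..4} \<subseteq> {1..n}"
    using ord unfolding strict_mono_on_def atLeastAtMost_1_4 idx_def by auto
  ultimately show "contains_pattern n w 4 p"
    unfolding contains_pattern_def by blast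
qed

lemma avoids_patterns_iff:
  "avoids n w 4 pat2413 \<and> avoids n w 4 pat4132 \<and> avoids n w 4 pat4213 \<and> avoids n w 4 pat3214
    \<longleftrightarrow> avoids_forbidden (map w [1..<Suc n])"
proof -
  have "contains_pattern n w 4 pat2413 \<longleftrightarrow> occurs order_2413 (map w [1..<Suc n])"
    by (rule contains_pattern_4_iff_occurs)
      (auto simp: atLeastAtMost_1_4 order_2413_def pat2413_def perm_of_list_def)
  moreover have "contains_pattern n w 4 pat4132 \<longleftrightarrow> occurs order_4132 (map w [1..<Suc n])"
    by (rule contains_pattern_4_iff_occurs)
      (auto simp: atLeastAtMost_1_4 order_4132_def pat4132_def perm_of_list_def)
  moreover have "contains_pattern n w 4 pat4213 \<longleftrightarrow> occurs order_4213 (map w [1..<Suc n])"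
    by (rule contains_pattern_4_iff_occurs)
      (auto simp: atLeastAtMost_1_4 order_4213_def pat4213_def perm_of_list_def)
  moreover have "contains_pattern n w 4 pat3214 \<longleftrightarrow> occurs order_3214 (map w [1..<Suc n])"
    by (rule contains_pattern_4_iff_occurs)
      (auto simp: atLeastAtMost_1_4 order_3214_def pat3214_def perm_of_list_def)
  ultimately show ?thesis
    unfolding avoids_def avoids_forbidden_def forbidden_def by auto
qed

lemma permutes_perm_of_list:
  assumes "distinct xs" "set xs = {1..n}"
  shows "perm_of_list xs permutes {1..n}"
proof (rule bij_imp_permutes)
  have len: "length xs = n" using assms length_if_set_eq_interval by blast
  have "inj_on (perm_of_list xs) {1..n}"
    using assms(1) len by (auto simp: inj_on_def perm_of_list_def nth_eq_iff_index_eq)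
  moreover have "perm_of_list xs ` {1..n} = set xs"
  proof -
    have "perm_of_list xs ` {1..n} = (\<lambda>i. xs ! (i - 1)) ` {1..n}"
      using len by (auto simp: perm_of_list_def)
    also have "\<dots> = (!) xs ` {..<n}"
      unfolding image_Suc_lessThan[symmetric] image_image by simp
    also have "\<dots> = set xs"
      using len by (auto simp: set_conv_nth)
    finally show ?thesis .
  qed
  ultimately show "bij_betw (perm_of_list xs) {1..n} {1..n}"
    using assms(2) by (simp add: bij_betw_def)
  show "perm_of_list xs x = x" if "x \<notin> {1..n}" for x
    using that len by (auto simp: perm_of_list_def)
qed

lemma e_eq_card_Av: "e n = card (Av n)"
  unfolding e_def
proof (rule card_eq_by_inverses[where f = "\<lambda>w. map w [1..<Suc n]" and g = perm_of_list])
  fix w assume "w \<in> {w. w permutes {1..n} \<and> avoids n w 4 pat2413 \<and> avoids n w 4 pat4132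
      \<and> avoids n w 4 pat4213 \<and> avoids n w 4 pat3214}"
  then have w: "w permutes {1..n}" and "avoids_forbidden (map w [1..<Suc n])"
    using avoids_patterns_iff by auto
  moreover have "set [1..<Suc n] = {1..n}" by auto
  ultimately have "map w [1..<Suc n] \<in> Av n"
    using permutes_inj_on[OF w] permutes_image[OF w] by (intro AvI) (simp_all add: distinct_map)
  moreover have "perm_of_list (map w [1..<Suc n]) = w"
  proof
    fix x show "perm_of_list (map w [1..<Suc n]) x = w x"
      using nth_map_upt_1[of "x - 1" n w] permutes_not_in[OF w, of x]
      by (cases "x \<in> {1..n}") (auto simp: perm_of_list_def simp del: upt_Suc)
  qed
  ultimately show "map w [1..<Suc n] \<in> Av n \<and> perm_of_list (map w [1..<Suc n]) = w" by simp
next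
  fix xs assume xs: "xs \<in> Av n"
  have map_xs: "map (perm_of_list xs) [1..<Suc n] = xs"
    by (rule nth_equalityI)
      (use AvD(4)[OF xs] nth_map_upt_1 in \<open>auto simp: perm_of_list_def simp del: upt_Suc\<close>)
  have "perm_of_list xs permutes {1..n}"
    using permutes_perm_of_list AvD[OF xs] by blast
  then show "perm_of_list xs \<in> {w. w permutes {1..n} \<and> avoids n w 4 pat2413 \<and> avoids n w 4 pat4132
      \<and> avoids n w 4 pat4213 \<and> avoids n w 4 pat3214} \<and> map (perm_of_list xs) [1..<Suc n] = xs"
    using avoids_patterns_iff[of n "perm_of_list xs"] map_xs AvD(3)[OF xs] by simp
qed

section \<open>Solving the recurrence\<close>

lemma power_Suc_Suc_of_root:
  fixes x :: real
  assumes "x * x = 4 * x - 2"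
  shows "x ^ Suc (Suc k) = 4 * x ^ Suc k - 2 * x ^ k"
proof -
  have "x ^ Suc (Suc k) = x ^ k * (x * x)" by (simp add: algebra_simps)
  also have "\<dots> = 4 * x ^ Suc k - 2 * x ^ k" by (simp add: assms algebra_simps)
  finally show ?thesis .
qed

lemma recurrence_closed_form:
  fixes f :: "nat \<Rightarrow> int"
  assumes "f 1 = 1" "f 2 = 2" "\<And>n. 3 \<le> n \<Longrightarrow> f n = 4 * f (n - 1) - 2 * f (n - 2)"
  shows "1 \<le> n \<Longrightarrow> real_of_int (f n) = ((2 + sqrt 2) ^ (n - 1) + (2 - sqrt 2) ^ (n - 1)) / 2"
proof (induction n rule: less_induct)
  case (less n)
  consider "n = 1" | "n = 2" | k where "n = Suc (Suc (Suc k))"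
    using less.prems by (metis One_nat_def Suc_1 Suc_le_D nat.exhaust)
  then show ?case
  proof cases
    case 3
    have "(2 + sqrt 2) * (2 + sqrt 2) = 4 * (2 + sqrt 2) - 2"
      "(2 - sqrt 2) * (2 - sqrt 2) = 4 * (2 - sqrt 2) - 2"
      by (simp_all add: algebra_simps)
    then have "(2 + sqrt 2) ^ (n - 1) = 4 * (2 + sqrt 2) ^ (n - 2) - 2 * (2 + sqrt 2) ^ (n - 3)"
      "(2 - sqrt 2) ^ (n - 1) = 4 * (2 - sqrt 2) ^ (n - 2) - 2 * (2 - sqrt 2) ^ (n - 3)"
      using power_Suc_Suc_of_root 3 by (simp_all add: numeral_3_eq_3)
    moreover have "real_of_int (f n) = 4 * real_of_int (f (n - 1)) - 2 * real_of_int (f (n - 2))"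
      using assms(3)[of n] 3 by simp
    moreover have "n - 1 - 1 = n - 2" "n - 2 - 1 = n - 3" by simp_all
    ultimately show ?thesis
      using less.IH[of "n - 1"] less.IH[of "n - 2"] 3 by simp
  qed (use assms in simp_all)
qed

theorem mainTheorem4:
  shows "e 1 = 1 \<and> e 2 = 2 \<and> (\<forall>n\<ge>3. int (e n) = 4 * int (e (n - 1)) - 2 * int (e (n - 2)))
         \<and> (\<forall>n\<ge>1. real (e n) = ((2 + sqrt 2) ^ (n - 1) + (2 - sqrt 2) ^ (n - 1)) / 2)"
proof -
  have e1: "e 1 = 1" using Av_1 by (simp add: e_eq_card_Av)
  have e2: "e 2 = 2" using card_Av_2 by (simp add: e_eq_card_Av)
  have rec: "int (e n) = 4 * int (e (n - 1)) - 2 * int (e (n - 2))" if "3 \<le> n" for n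
    using card_Av_recurrence[OF that] by (simp add: e_eq_card_Av)
  have "real (e n) = ((2 + sqrt 2) ^ (n - 1) + (2 - sqrt 2) ^ (n - 1)) / 2" if "1 \<le> n" for n
    using recurrence_closed_form[of "\<lambda>n. int (e n)"] e1 e2 rec that by simp
  with e1 e2 rec show ?thesis by blast
qed

end
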